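(* Assume (A4), let $\rho>0$ be such that $(\nabla X(0),\nabla X(\rho e_1))$ has a nondegenerate distribution, and set $t=\rho e_1$. Let $(\xi(0),\xi(t))$ be a pair of random symmetric matrices distributed as $(\nabla^2X(0),\nabla^2X(t))$ conditionally on $\nabla X(0)=\nabla X(t)=0$. Write $\xi_d(s)=(\xi_{11}(s),\dots,\xi_{NN}(s))$ and $\xi_u(s)=(\xi_{12}(s),\xi_{13}(s),\dots,\xi_{1N}(s),\xi_{23}(s),\dots,\xi_{(N-1)N}(s))$ (lexicographic order). Then $(\xi_d(0),\xi_u(0),\xi_d(t),\xi_u(t))$ is centred Gaussian with covariance matrix $$\begin{pmatrix}\Gamma_1&0&\Gamma_3&0\\0&\Gamma_2&0&\Gamma_4\\\Gamma_3&0&\Gamma_1&0\\0&\Gamma_4&0&\Gamma_2\end{pmatrix},$$ where, writing $\mathbf r,\mathbf r',\mathbf r'',\mathbf r''',\mathbf r^{(4)}$ for these functions evaluated at $\rho^2$, $a:=4\mathbf r''+8\rho^2\mathbf r'''$ and $d:=12\mathbf r''+48\rho^2\mathbf r'''+16\rho^4\mathbf r^{(4)}$: $\Gamma_1=4\mathbf r''(0)(2Id_N+J_{N,N})+\dfrac{\rho^2\mathbf r'(0)}{2[\mathbf r'(0)^2-(\mathbf r'+2\mathbf r''\rho^2)^2]}M$; $\Gamma_3=T+\dfrac{\rho^2(\mathbf r'+2\mathbf r''\rho^2)}{2[\mathbf r'(0)^2-(\mathbf r'+2\mathbf r''\rho^2)^2]}M$, where $T$ is the $N\times N$ symmetric matrix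 with $T_{11}=d$, $T_{1j}=T_{j1}=a$ for $j\ge2$, $T_{jj}=12\mathbf r''$ and $T_{jk}=4\mathbf r''$ for $j\ne k$, $j,k\ge2$; $M$ is the $N\times N$ symmetric matrix with $M_{11}=(12\mathbf r''+8\rho^2\mathbf r''')^2$, $M_{1j}=M_{j1}=4\mathbf r''(12\mathbf r''+8\rho^2\mathbf r''')$ for $j\ge2$, and $M_{jk}=16\mathbf r''^2$ for $j,k\ge2$; $\Gamma_2=\operatorname{diag}(D_1,D_2)$ with $D_1=\Big(4\mathbf r''(0)+\dfrac{8\rho^2(\mathbf r'')^2\mathbf r'(0)}{\mathbf r'(0)^2-(\mathbf r')^2}\Big)Id_{N-1}$ and $D_2=4\mathbf r''(0)Id_{(N-1)(N-2)/2}$; $\Gamma_4=\operatorname{diag}(\tilde D_1,\tilde D_2)$ with $\tilde D_1=\Big(a+\dfrac{8\rho^2(\mathbf r'')^2\mathbf r'}{\mathbf r'(0)^2-(\mathbf r')^2}\Big)Id_{N-1}$ and $\tilde D_2=4\mathbf r''Id_{(N-1)(N-2)/2}$.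
   Context: Assumption (A4): $\mathcal X=\{X(t):t\in\mathbb R^N\}$ is a stationary isotropic real Gaussian field, centred with variance 1, with covariance $\operatorname{E}(X(s)X(t))=\mathbf r(\|s-t\|^2)$, $\mathbf r\in\mathcal C^4$ (equivalently the spectral moment $\lambda_8$ is finite), $\lambda_2=-2\mathbf r'(0)>0$, where $\lambda_{2n}=(-1)^n\frac{(2n)!}{n!}\mathbf r^{(n)}(0)$; when $N=1$, also $\lambda_{2n}\lambda_{2n-4}>\lambda_{2n-2}^2$ for $n=2,3,4$. $e_1=(1,0,\dots,0)$; $Id_n$ is the identity; $J_{n,p}$ the $n\times p$ matrix of ones. *)

theory Defs
  imports "HOL-Probability.Probability"
begin

(* Centred Gaussian family indexed by I with covariance K, defined through
   characteristic functions of all finite linear combinations (this also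
   covers degenerate Gaussian laws). *)
definition centred_gaussian ::
  "'a measure \<Rightarrow> ('i \<Rightarrow> 'a \<Rightarrow> real) \<Rightarrow> 'i set \<Rightarrow> ('i \<Rightarrow> 'i \<Rightarrow> real) \<Rightarrow> bool" where
  "centred_gaussian M Y I K \<longleftrightarrow>
     (\<forall>i\<in>I. Y i \<in> borel_measurable M) \<and>
     (\<forall>F c. finite F \<longrightarrow> F \<subseteq> I \<longrightarrow>
        (CLINT \<omega>|M. iexp (\<Sum>i\<in>F. c i * Y i \<omega>))
          = complex_of_real (exp (- (\<Sum>i\<in>F. \<Sum>j\<in>F. c i * c j * K i j) / 2)))"

definition partial :: "'n::finite \<Rightarrow> (real^'n \<Rightarrow> real) \<Rightarrow> real^'n \<Rightarrow> real" where
  "partial i f s = deriv (\<lambda>h. f (s + h *\<^sub>R axis i 1)) 0"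

definition C2_fun :: "(real^'n::finite \<Rightarrow> real) \<Rightarrow> bool" where
  "C2_fun f \<longleftrightarrow> (\<forall>i j s.
      ((\<lambda>h. f (s + h *\<^sub>R axis i 1)) has_real_derivative partial i f s) (at 0) \<and>
      ((\<lambda>h. partial j f (s + h *\<^sub>R axis i 1)) has_real_derivative partial i (partial j f) s) (at 0))
    \<and> (\<forall>i. continuous_on UNIV (partial i f))
    \<and> (\<forall>i j. continuous_on UNIV (partial i (partial j f)))"

(* spectral moments: lambda_{2n} = (-1)^n (2n)!/n! r^(n)(0), with D k = k-th derivative of r *)
definition lam :: "(nat \<Rightarrow> real \<Rightarrow> real) \<Rightarrow> nat \<Rightarrow> real" where
  "lam D n = (-1)^n * fact (2*n) / fact n * D n 0"

definition gcov :: "'a measure \<Rightarrow> ('a \<Rightarrow> real) \<Rightarrow> ('a \<Rightarrow> real) \<Rightarrow> real" where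
  "gcov M U V = (LINT \<omega>|M. U \<omega> * V \<omega>)"

(* Gaussian regression: the conditional law of Z given Y = 0 (Y, Z jointly centred
   Gaussian, Y nondegenerate) is the law of Z - Cov(Z,Y) Cov(Y)^{-1} Y. *)
definition regress :: "'a measure \<Rightarrow> ('p::finite \<Rightarrow> 'a \<Rightarrow> real) \<Rightarrow> ('q \<Rightarrow> 'a \<Rightarrow> real) \<Rightarrow> 'q \<Rightarrow> 'a \<Rightarrow> real" where
  "regress M Y Z q \<omega> = Z q \<omega> -
     (\<Sum>p\<in>UNIV. \<Sum>p'\<in>UNIV. gcov M (Z q) (Y p)
        * (matrix_inv (\<chi> p1 p2. gcov M (Y p1) (Y p2)) :: real^'p^'p) $ p $ p' * Y p' \<omega>)"

(* Index 1 of R^N: the least coordinate. *)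
definition idx1 :: "'n::{finite,linorder}" where
  "idx1 = Min UNIV"

(* Index (b,i,j): b = False means time 0,
   b = True means time t; (i,i) entries form xi_d, (i,j) with i<j form xi_u.
   D k = k-th derivative of r, q = rho^2. *)
definition Kcov :: "(nat \<Rightarrow> real \<Rightarrow> real) \<Rightarrow> real \<Rightarrow> (bool \<times> 'n::{finite,linorder} \<times> 'n) \<Rightarrow> (bool \<times> 'n \<times> 'n) \<Rightarrow> real" where
  "Kcov D \<rho> = (\<lambda>(b,i,j) (b',k,l).
     let i1 = (idx1::'n); q = \<rho>^2;
       r1 = D 1 q; r2 = D 2 q; r3 = D 3 q; r4 = D 4 q; r01 = D 1 0; r02 = D 2 0;
       a = 4*r2 + 8*q*r3; d = 12*r2 + 48*q*r3 + 16*q^2*r4;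
       den = r01^2 - (r1 + 2*r2*q)^2;
       Mm = (\<lambda>j k. if j = i1 \<and> k = i1 then (12*r2 + 8*q*r3)^2
                  else if j = i1 \<or> k = i1 then 4*r2*(12*r2 + 8*q*r3) else 16*r2^2);
       T = (\<lambda>j k. if j = i1 \<and> k = i1 then d else if j = i1 \<or> k = i1 then a
                  else if j = k then 12*r2 else 4*r2);
       G1 = (\<lambda>j k. 4*r02*(2*(if j = k then 1 else 0) + 1) + q*r01/(2*den) * Mm j k);
       G3 = (\<lambda>j k. T j k + q*(r1 + 2*r2*q)/(2*den) * Mm j k);
       G2 = (\<lambda>i j k l. if (i,j) \<noteq> (k,l) then 0
               else if i = i1 then 4*r02 + 8*q*r2^2*r01/(r01^2 - r1^2) else 4*r02);
       G4 = (\<lambda>i j k l. if (i,j) \<noteq> (k,l) then 0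
               else if i = i1 then a + 8*q*r2^2*r1/(r01^2 - r1^2) else 4*r2)
     in if i = j \<and> k = l then (if b = b' then G1 i k else G3 i k)
        else if i \<noteq> j \<and> k \<noteq> l then (if b = b' then G2 i j k l else G4 i j k l)
        else 0)"

end

theory Submission
  imports Defs
begin

text \<open>
  Differentiating the covariance \<open>r(\<parallel>s - s'\<parallel>\<^sup>2)\<close> of the field gives the covariances of its partial
  derivatives. Since derivatives are pointwise limits of difference quotients, and a centred Gaussian
  family stays Gaussian when such limits with convergent covariances are added, the field together
  with all its first and second partial derivatives at all points is a centred Gaussian family
  with these covariances.

  At the points \<open>0\<close> and \<open>t = \<rho> e\<^sub>1\<close> the gradient components split into uncorrelated pairs
  \<open>(\<partial>\<^sub>kX(0), \<partial>\<^sub>kX(t))\<close>, so the covariance of the gradients is block diagonal with \<open>2\<times>2\<close> blocks,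
  invertible by the nondegeneracy hypothesis and inverted explicitly. The regression residual of the
  Hessians on the gradients is a linear image of the family, hence centred Gaussian with the Schur
  complement covariance \<open>K\<^sub>Z\<^sub>Z - K\<^sub>Z\<^sub>Y K\<^sub>Y\<^sub>Y\<^sup>-\<^sup>1 K\<^sub>Y\<^sub>Z\<close>; evaluating it entry by entry gives the
  stated matrix.
\<close>

section \<open>Centred Gaussian families\<close>

lemma centred_gaussian_measurable:
  "centred_gaussian M W I K \<Longrightarrow> i \<in> I \<Longrightarrow> W i \<in> borel_measurable M"
  unfolding centred_gaussian_def by blast

lemma centred_gaussian_char:
  "centred_gaussian M W I K \<Longrightarrow> finite F \<Longrightarrow> F \<subseteq> I \<Longrightarrow>
   (CLINT \<omega>|M. iexp (\<Sum>i\<in>F. c i * W i \<omega>))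
     = complex_of_real (exp (- (\<Sum>i\<in>F. \<Sum>j\<in>F. c i * c j * K i j) / 2))"
  unfolding centred_gaussian_def by blast

lemma centred_gaussian_subset:
  "centred_gaussian M W I K \<Longrightarrow> J \<subseteq> I \<Longrightarrow> centred_gaussian M W J K"
  unfolding centred_gaussian_def by blast

lemma centred_gaussian_cong:
  assumes cg: "centred_gaussian M W I K" and KK: "\<And>i j. i \<in> I \<Longrightarrow> j \<in> I \<Longrightarrow> K i j = K' i j"
  shows "centred_gaussian M W I K'"
  unfolding centred_gaussian_def
proof (intro conjI allI impI ballI)
  fix i assume "i \<in> I" then show "W i \<in> borel_measurable M" by (rule centred_gaussian_measurable[OF cg])
next
  fix F c assume F: "finite F" "F \<subseteq> I"
  have "(\<Sum>i\<in>F. \<Sum>j\<in>F. c i * c j * K i j) = (\<Sum>i\<in>F. \<Sum>j\<in>F. c i * c j * K' i j)"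
    using F KK by (intro sum.cong refl) (auto simp: subset_iff)
  then show "(CLINT \<omega>|M. iexp (\<Sum>i\<in>F. c i * W i \<omega>))
      = complex_of_real (exp (- (\<Sum>i\<in>F. \<Sum>j\<in>F. c i * c j * K' i j) / 2))"
    using centred_gaussian_char[OF cg F] by simp
qed

lemma centred_gaussian_reindex:
  assumes cg: "centred_gaussian M W J K" and inj: "inj_on g J"
    and V: "\<And>j. j \<in> J \<Longrightarrow> V (g j) = W j"
    and K': "\<And>j j'. j \<in> J \<Longrightarrow> j' \<in> J \<Longrightarrow> K' (g j) (g j') = K j j'"
  shows "centred_gaussian M V (g ` J) K'"
  unfolding centred_gaussian_def
proof (intro conjI allI impI ballI)
  fix i assume "i \<in> g ` J"
  then show "V i \<in> borel_measurable M" using V centred_gaussian_measurable[OF cg] by auto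
next
  fix F c assume F: "finite F" "F \<subseteq> g ` J"
  define F0 where "F0 = {j\<in>J. g j \<in> F}"
  have FF: "F = g ` F0" using F unfolding F0_def by auto
  have inj0: "inj_on g F0" using inj unfolding F0_def by (auto intro: inj_on_subset)
  have fin0: "finite F0" using F(1) FF inj0 finite_image_iff by fastforce
  have sub0: "F0 \<subseteq> J" unfolding F0_def by auto
  have "(\<Sum>i\<in>F. c i * V i \<omega>) = (\<Sum>j\<in>F0. c (g j) * W j \<omega>)" for \<omega>
    unfolding FF using inj0 sub0 V by (simp add: sum.reindex subset_iff)
  moreover have "(\<Sum>i\<in>F. \<Sum>j\<in>F. c i * c j * K' i j) = (\<Sum>i\<in>F0. \<Sum>j\<in>F0. c (g i) * c (g j) * K i j)"
    unfolding FF using inj0 sub0 K' by (simp add: sum.reindex subset_iff)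
  ultimately show "(CLINT \<omega>|M. iexp (\<Sum>i\<in>F. c i * V i \<omega>))
      = complex_of_real (exp (- (\<Sum>i\<in>F. \<Sum>j\<in>F. c i * c j * K' i j) / 2))"
    using centred_gaussian_char[OF cg fin0 sub0, of "\<lambda>j. c (g j)"] by simp
qed

lemma centred_gaussian_union_finite:
  assumes "\<And>F. finite F \<Longrightarrow> F \<subseteq> J \<Longrightarrow> centred_gaussian M W (I \<union> F) K"
  shows "centred_gaussian M W (I \<union> J) K"
  unfolding centred_gaussian_def
proof (intro conjI allI impI ballI)
  fix i assume "i \<in> I \<union> J"
  then show "W i \<in> borel_measurable M"
    using assms[of "{i} \<inter> J"] by (auto dest: centred_gaussian_measurable)
next
  fix F c assume "finite F" "F \<subseteq> I \<union> J"
  then show "(CLINT \<omega>|M. iexp (\<Sum>i\<in>F. c i * W i \<omega>))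
      = complex_of_real (exp (- (\<Sum>i\<in>F. \<Sum>j\<in>F. c i * c j * K i j) / 2))"
    using assms[of "F \<inter> J"] by (intro centred_gaussian_char[of M W "I \<union> (F \<inter> J)"]) auto
qed

lemma centred_gaussian_char_image:
  assumes cg: "centred_gaussian M W I K" and G: "finite G" "g ` G \<subseteq> I"
  shows "(CLINT \<omega>|M. iexp (\<Sum>m\<in>G. \<beta> m * W (g m) \<omega>))
     = complex_of_real (exp (- (\<Sum>m\<in>G. \<Sum>m'\<in>G. \<beta> m * \<beta> m' * K (g m) (g m')) / 2))"
proof -
  define c where "c a = (\<Sum>m\<in>{x\<in>G. g x = a}. \<beta> m)" for a
  have lin: "(\<Sum>m\<in>G. \<beta> m * W (g m) \<omega>) = (\<Sum>a\<in>g`G. c a * W a \<omega>)" for \<omega>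
    unfolding c_def sum_distrib_right
    by (subst sum.image_gen[OF G(1)]) (auto intro!: sum.cong)
  have "(\<Sum>m\<in>G. \<Sum>m'\<in>G. \<beta> m * \<beta> m' * K (g m) (g m'))
      = (\<Sum>m\<in>G. \<beta> m * (\<Sum>a'\<in>g`G. c a' * K (g m) a'))"
    unfolding c_def sum_distrib_left sum_distrib_right
    by (subst sum.image_gen[OF G(1)])
      (auto intro!: sum.cong simp: sum_distrib_left sum_distrib_right mult.assoc)
  also have "\<dots> = (\<Sum>a\<in>g`G. c a * (\<Sum>a'\<in>g`G. c a' * K a a'))"
    unfolding c_def
    by (subst sum.image_gen[OF G(1)]) (auto intro!: sum.cong simp: sum_distrib_right)
  finally have quad: "(\<Sum>m\<in>G. \<Sum>m'\<in>G. \<beta> m * \<beta> m' * K (g m) (g m'))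
      = (\<Sum>a\<in>g`G. \<Sum>a'\<in>g`G. c a * c a' * K a a')"
    by (simp add: sum_distrib_left mult.assoc)
  show ?thesis unfolding lin quad using G by (intro centred_gaussian_char[OF cg]) auto
qed

lemma centred_gaussian_linear_image:
  assumes cg: "centred_gaussian M W I K" and G: "finite G" "g ` G \<subseteq> I"
    and V: "\<And>q. q \<in> Q \<Longrightarrow> V q = (\<lambda>\<omega>. \<Sum>m\<in>G. a q m * W (g m) \<omega>)"
  shows "centred_gaussian M V Q (\<lambda>q q'. \<Sum>m\<in>G. \<Sum>m'\<in>G. a q m * a q' m' * K (g m) (g m'))"
  unfolding centred_gaussian_def
proof (intro conjI allI impI ballI)
  fix q assume q: "q \<in> Q"
  have [measurable]: "W (g m) \<in> borel_measurable M" if "m \<in> G" for m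
    using cg G that by (auto intro: centred_gaussian_measurable)
  show "V q \<in> borel_measurable M" unfolding V[OF q] by measurable
next
  fix F c assume F: "finite F" "F \<subseteq> Q"
  define \<beta> where "\<beta> m = (\<Sum>q\<in>F. c q * a q m)" for m
  have "(\<Sum>q\<in>F. c q * V q \<omega>) = (\<Sum>q\<in>F. \<Sum>m\<in>G. c q * (a q m * W (g m) \<omega>))" for \<omega>
    using F V by (auto simp: sum_distrib_left intro!: sum.cong)
  also have "\<dots> \<omega> = (\<Sum>m\<in>G. \<beta> m * W (g m) \<omega>)" for \<omega>
    unfolding \<beta>_def by (subst sum.swap) (simp add: sum_distrib_right mult.assoc)
  finally have lin: "(\<Sum>q\<in>F. c q * V q \<omega>) = (\<Sum>m\<in>G. \<beta> m * W (g m) \<omega>)" for \<omega> .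
  let ?f = "\<lambda>i j m m'. c i * c j * (a i m * a j m' * K (g m) (g m'))"
  have "(\<Sum>m\<in>G. \<Sum>m'\<in>G. \<beta> m * \<beta> m' * K (g m) (g m'))
      = (\<Sum>m\<in>G. \<Sum>m'\<in>G. \<Sum>i\<in>F. \<Sum>j\<in>F. ?f i j m m')"
    unfolding \<beta>_def sum_product sum_distrib_right
    by (intro sum.cong refl) (simp add: sum_distrib_left algebra_simps)
  also have "\<dots> = (\<Sum>m\<in>G. \<Sum>i\<in>F. \<Sum>j\<in>F. \<Sum>m'\<in>G. ?f i j m m')"
    by (intro sum.cong refl, subst sum.swap) (intro sum.cong refl, rule sum.swap)
  also have "\<dots> = (\<Sum>i\<in>F. \<Sum>j\<in>F. \<Sum>m\<in>G. \<Sum>m'\<in>G. ?f i j m m')"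
    by (subst sum.swap) (intro sum.cong refl, rule sum.swap)
  finally have quad: "(\<Sum>m\<in>G. \<Sum>m'\<in>G. \<beta> m * \<beta> m' * K (g m) (g m'))
      = (\<Sum>i\<in>F. \<Sum>j\<in>F. c i * c j * (\<Sum>m\<in>G. \<Sum>m'\<in>G. a i m * a j m' * K (g m) (g m')))"
    by (simp add: sum_distrib_left)
  show "(CLINT \<omega>|M. iexp (\<Sum>i\<in>F. c i * V i \<omega>)) = complex_of_real (exp (- (\<Sum>i\<in>F. \<Sum>j\<in>F.
      c i * c j * (\<Sum>m\<in>G. \<Sum>m'\<in>G. a i m * a j m' * K (g m) (g m'))) / 2))"
    unfolding lin quad[symmetric] by (rule centred_gaussian_char_image[OF cg G])
qed

text \<open>By Levy's uniqueness theorem \<open>V\<close> is distributed as \<open>\<surd>\<sigma>\<close> times a standard normal variable.\<close>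

lemma gaussian_second_moment:
  assumes P: "prob_space M" and V[measurable]: "V \<in> borel_measurable M"
    and char: "\<And>t. (CLINT \<omega>|M. iexp (t * V \<omega>)) = complex_of_real (exp (- (t * t * \<sigma>) / 2))"
  shows "integrable M (\<lambda>\<omega>. (V \<omega>)\<^sup>2)" and "(LINT \<omega>|M. (V \<omega>)\<^sup>2) = \<sigma>"
proof -
  interpret prob_space M by fact
  let ?D = "distr M borel V"
  have D: "real_distribution ?D" by (rule real_distribution_distr) simp
  have char_D: "char ?D t = complex_of_real (exp (- (t * t * \<sigma>) / 2))" for t
    unfolding char_def using char[of t] by (subst integral_distr) auto
  have "\<sigma> \<ge> 0"
  proof (rule ccontr)
    assume "\<not> \<sigma> \<ge> 0"
    then have "exp (- (1 * 1 * \<sigma>) / 2) > 1" by simp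
    moreover have "norm (char ?D 1) \<le> 1" by (rule real_distribution.cmod_char_le_1[OF D])
    ultimately show False using char_D[of 1] by simp
  qed
  define s where "s = sqrt \<sigma>"
  have s2: "s * s = \<sigma>" using \<open>\<sigma> \<ge> 0\<close> unfolding s_def by simp
  let ?N = "distr std_normal_distribution borel (\<lambda>x. s * x)"
  have N: "real_distribution ?N"
    using prob_space.real_distribution_distr[OF real_distribution.axioms(1)[OF real_dist_normal_dist]]
    by simp
  have char_N: "char ?N t = complex_of_real (exp (- (t * t * \<sigma>) / 2))" for t
  proof -
    have "char ?N t = char std_normal_distribution (t * s)"
      unfolding char_def by (subst integral_distr) (auto simp: mult.assoc)
    also have "\<dots> = complex_of_real (exp (- (t * t * \<sigma>) / 2))"
      by (simp add: char_std_normal_distribution power2_eq_square s2[symmetric] algebra_simps)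
    finally show ?thesis .
  qed
  have DN: "?D = ?N" by (rule Levy_uniqueness[OF D N]) (auto simp: char_D char_N)
  have "integrable ?N (\<lambda>x. x\<^sup>2)"
    by (subst integrable_distr_eq)
      (auto simp: power_mult_distrib
        intro!: integrable_mult_right integrable_std_normal_distribution_moment)
  then show "integrable M (\<lambda>\<omega>. (V \<omega>)\<^sup>2)"
    by (subst (asm) DN[symmetric], subst (asm) integrable_distr_eq) auto
  have "(LINT \<omega>|M. (V \<omega>)\<^sup>2) = (LINT x|?N. x\<^sup>2)" by (subst DN[symmetric], subst integral_distr) auto
  also have "\<dots> = (LINT x|std_normal_distribution. s\<^sup>2 * x ^ (2 * 1))"
    by (subst integral_distr) (auto simp: power_mult_distrib)
  also have "\<dots> = \<sigma>"
    using std_normal_distribution_even_moments(1)[of 1] s2 by (simp add: power2_eq_square)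
  finally show "(LINT \<omega>|M. (V \<omega>)\<^sup>2) = \<sigma>" .
qed

lemma centred_gaussian_variance:
  assumes P: "prob_space M" and cg: "centred_gaussian M W I K" and G: "finite G" "g ` G \<subseteq> I"
  shows "integrable M (\<lambda>\<omega>. (\<Sum>m\<in>G. c m * W (g m) \<omega>)\<^sup>2)"
    and "(LINT \<omega>|M. (\<Sum>m\<in>G. c m * W (g m) \<omega>)\<^sup>2)
      = (\<Sum>m\<in>G. \<Sum>m'\<in>G. c m * c m' * K (g m) (g m'))"
proof -
  have [measurable]: "W (g m) \<in> borel_measurable M" if "m \<in> G" for m
    using G that by (auto intro: centred_gaussian_measurable[OF cg])
  have "(\<lambda>\<omega>. \<Sum>m\<in>G. c m * W (g m) \<omega>) \<in> borel_measurable M" by measurable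
  moreover have "(CLINT \<omega>|M. iexp (t * (\<Sum>m\<in>G. c m * W (g m) \<omega>)))
      = complex_of_real (exp (- (t * t * (\<Sum>m\<in>G. \<Sum>m'\<in>G. c m * c m' * K (g m) (g m'))) / 2))" for t
    using centred_gaussian_char_image[OF cg G, of "\<lambda>m. t * c m"]
    by (simp add: sum_distrib_left algebra_simps)
  ultimately show "integrable M (\<lambda>\<omega>. (\<Sum>m\<in>G. c m * W (g m) \<omega>)\<^sup>2)"
    and "(LINT \<omega>|M. (\<Sum>m\<in>G. c m * W (g m) \<omega>)\<^sup>2)
      = (\<Sum>m\<in>G. \<Sum>m'\<in>G. c m * c m' * K (g m) (g m'))"
    by (rule gaussian_second_moment[OF P])+
qed

lemma centred_gaussian_variance_pos:
  assumes P: "prob_space M" and cg: "centred_gaussian M W I K" and G: "finite G" "g ` G \<subseteq> I"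
    and nondeg: "\<not> (AE \<omega> in M. (\<Sum>m\<in>G. c m * W (g m) \<omega>) = 0)"
  shows "0 < (\<Sum>m\<in>G. \<Sum>m'\<in>G. c m * c m' * K (g m) (g m'))"
proof -
  let ?V = "\<lambda>\<omega>. \<Sum>m\<in>G. c m * W (g m) \<omega>"
  note int = centred_gaussian_variance(1)[OF P cg G, of c]
    and var = centred_gaussian_variance(2)[OF P cg G, of c]
  have "(LINT \<omega>|M. (?V \<omega>)\<^sup>2) \<noteq> 0"
    using nondeg int integral_nonneg_eq_0_iff_AE[of M "\<lambda>\<omega>. (?V \<omega>)\<^sup>2"] by auto
  moreover have "(LINT \<omega>|M. (?V \<omega>)\<^sup>2) \<ge> 0" by simp
  ultimately show ?thesis using var by linarith
qed

lemma centred_gaussian_covariance: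
  assumes P: "prob_space M" and cg: "centred_gaussian M W I K" and ij: "i \<in> I" "j \<in> I"
    and sym: "K i j = K j i"
  shows "gcov M (W i) (W j) = K i j"
proof -
  let ?v = "\<lambda>c. LINT \<omega>|M. (\<Sum>m\<in>{True, False}. c m * W (if m then i else j) \<omega>)\<^sup>2"
  have G: "finite {True, False}" "(\<lambda>m. if m then i else j) ` {True, False} \<subseteq> I" using ij by auto
  note int = centred_gaussian_variance(1)[OF P cg G] and var = centred_gaussian_variance(2)[OF P cg G]
  have prod: "W i \<omega> * W j \<omega> = ((W i \<omega> + W j \<omega>)\<^sup>2 - (W i \<omega>)\<^sup>2 - (W j \<omega>)\<^sup>2) / 2" for \<omega>
    by (simp add: power2_eq_square algebra_simps)
  have sums: "(\<Sum>m\<in>{True, False}. (\<lambda>_. 1) m * W (if m then i else j) \<omega>) = W i \<omega> + W j \<omega>"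
    "(\<Sum>m\<in>{True, False}. (\<lambda>m. if m then 1 else 0) m * W (if m then i else j) \<omega>) = W i \<omega>"
    "(\<Sum>m\<in>{True, False}. (\<lambda>m. if m then 0 else 1) m * W (if m then i else j) \<omega>) = W j \<omega>" for \<omega>
    by simp_all
  have "gcov M (W i) (W j)
      = (?v (\<lambda>_. 1) - ?v (\<lambda>m. if m then 1 else 0) - ?v (\<lambda>m. if m then 0 else 1)) / 2"
    unfolding gcov_def prod using int[of "\<lambda>_. 1"] int[of "\<lambda>m. if m then 1 else 0"]
      int[of "\<lambda>m. if m then 0 else 1"]
    by (simp add: sums)
  also have "\<dots> = K i j" unfolding var using sym by simp
  finally show ?thesis .
qed

lemma iexp_integral_LIMSEQ:
  assumes P: "prob_space M"
    and meas: "\<And>n. S n \<in> borel_measurable M" "S' \<in> borel_measurable M"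
    and lim: "\<And>\<omega>. \<omega> \<in> space M \<Longrightarrow> (\<lambda>n. S n \<omega>) \<longlonglongrightarrow> S' \<omega>"
  shows "(\<lambda>n. CLINT \<omega>|M. iexp (S n \<omega>)) \<longlonglongrightarrow> (CLINT \<omega>|M. iexp (S' \<omega>))"
proof (rule integral_dominated_convergence[where w="\<lambda>_. 1"])
  interpret prob_space M by fact
  show "(\<lambda>\<omega>. iexp (S' \<omega>)) \<in> borel_measurable M" "(\<lambda>\<omega>. iexp (S n \<omega>)) \<in> borel_measurable M" for n
    using meas by (auto intro!: borel_measurable_continuous_on[where f="\<lambda>x. iexp x"] continuous_intros)
  show "integrable M (\<lambda>_. 1::real)" by simp
  show "AE \<omega> in M. (\<lambda>n. iexp (S n \<omega>)) \<longlonglongrightarrow> iexp (S' \<omega>)"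
    using lim by (intro AE_I2 tendsto_intros) auto
  show "AE \<omega> in M. norm (iexp (S n \<omega>)) \<le> 1" for n
    by (simp add: norm_exp_i_times)
qed

lemma quadratic_form_insert:
  fixes K :: "'i \<Rightarrow> 'i \<Rightarrow> real"
  assumes sym: "\<And>a b. K a b = K b a" and F: "finite F" "k \<notin> F"
  shows "(\<Sum>i\<in>insert k F. \<Sum>j\<in>insert k F. c i * c j * K i j)
    = c k * c k * K k k + 2 * c k * (\<Sum>b\<in>F. c b * K k b) + (\<Sum>i\<in>F. \<Sum>j\<in>F. c i * c j * K i j)"
proof -
  have "(\<Sum>i\<in>F. c i * c k * K i k) = c k * (\<Sum>b\<in>F. c b * K k b)"
    by (simp add: sum_distrib_left sym[of _ k] algebra_simps)
  moreover have "(\<Sum>j\<in>F. c k * c j * K k j) = c k * (\<Sum>b\<in>F. c b * K k b)"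
    by (simp add: sum_distrib_left algebra_simps)
  ultimately show ?thesis using F by (simp add: sum.distrib)
qed

lemma centred_gaussian_char_add_combination:
  assumes cg: "centred_gaussian M W A K" and sym: "\<And>a b. K a b = K b a"
    and G: "finite G" "g ` G \<subseteq> A" and F: "finite F" "F \<subseteq> A"
  shows "(CLINT \<omega>|M. iexp (a * (\<Sum>m\<in>G. \<alpha> m * W (g m) \<omega>) + (\<Sum>b\<in>F. c b * W b \<omega>)))
    = complex_of_real (exp (- (a * a * (\<Sum>m\<in>G. \<Sum>m'\<in>G. \<alpha> m * \<alpha> m' * K (g m) (g m'))
        + 2 * a * (\<Sum>b\<in>F. c b * (\<Sum>m\<in>G. \<alpha> m * K (g m) b))
        + (\<Sum>b\<in>F. \<Sum>b'\<in>F. c b * c b' * K b b')) / 2))"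
proof -
  define h where "h x = (case x of Inl m \<Rightarrow> g m | Inr b \<Rightarrow> b)" for x
  define \<beta> where "\<beta> x = (case x of Inl m \<Rightarrow> a * \<alpha> m | Inr b \<Rightarrow> c b)" for x
  have "(CLINT \<omega>|M. iexp (\<Sum>x\<in>G <+> F. \<beta> x * W (h x) \<omega>))
      = complex_of_real (exp (- (\<Sum>x\<in>G <+> F. \<Sum>y\<in>G <+> F. \<beta> x * \<beta> y * K (h x) (h y)) / 2))"
    using G F by (intro centred_gaussian_char_image[OF cg]) (auto simp: h_def)
  moreover have "(\<Sum>x\<in>G <+> F. \<beta> x * W (h x) \<omega>)
      = a * (\<Sum>m\<in>G. \<alpha> m * W (g m) \<omega>) + (\<Sum>b\<in>F. c b * W b \<omega>)" for \<omega>
    using G F by (simp add: sum.Plus h_def \<beta>_def sum_distrib_left mult.assoc)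
  moreover have "(\<Sum>m\<in>G. \<Sum>b\<in>F. a * \<alpha> m * c b * K (g m) b)
      = a * (\<Sum>b\<in>F. c b * (\<Sum>m\<in>G. \<alpha> m * K (g m) b))"
    by (subst sum.swap) (simp add: sum_distrib_left algebra_simps)
  moreover have "(\<Sum>b\<in>F. \<Sum>m\<in>G. c b * (a * \<alpha> m) * K b (g m))
      = a * (\<Sum>b\<in>F. c b * (\<Sum>m\<in>G. \<alpha> m * K (g m) b))"
    by (simp add: sum_distrib_left algebra_simps sym[of _ "g _"])
  ultimately show ?thesis
    using G F by (simp add: sum.Plus h_def \<beta>_def sum.distrib sum_distrib_left algebra_simps)
qed

text \<open>This is how derivatives of the field, as limits of difference quotients, join the family.\<close>

lemma centred_gaussian_insert_limit:
  assumes P: "prob_space M"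
    and cg: "centred_gaussian M W A K"
    and sym: "\<And>a b. K a b = K b a"
    and k: "k \<notin> A"
    and G: "finite G" "\<And>n. g n ` G \<subseteq> A"
    and lim: "\<And>\<omega>. \<omega> \<in> space M \<Longrightarrow> (\<lambda>n. \<Sum>m\<in>G. \<alpha> n m * W (g n m) \<omega>) \<longlonglongrightarrow> W k \<omega>"
    and cross: "\<And>b. b \<in> A \<Longrightarrow> (\<lambda>n. \<Sum>m\<in>G. \<alpha> n m * K (g n m) b) \<longlonglongrightarrow> K k b"
    and var: "(\<lambda>n. \<Sum>m\<in>G. \<Sum>m'\<in>G. \<alpha> n m * \<alpha> n m' * K (g n m) (g n m')) \<longlonglongrightarrow> K k k"
  shows "centred_gaussian M W (insert k A) K"
proof -
  have mW[measurable]: "W a \<in> borel_measurable M" if "a \<in> A" for a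
    using cg that by (rule centred_gaussian_measurable)
  have mWg[measurable]: "W (g n m) \<in> borel_measurable M" if "m \<in> G" for n m
    using G(2) that by (blast intro: mW)
  have mk[measurable]: "W k \<in> borel_measurable M"
    by (rule borel_measurable_LIMSEQ_real[OF lim]) (use G in measurable)
  show ?thesis
    unfolding centred_gaussian_def
  proof (intro conjI allI impI ballI)
    fix i assume "i \<in> insert k A" then show "W i \<in> borel_measurable M" using mk mW by auto
  next
    fix F c assume F: "finite F" "F \<subseteq> insert k A"
    show "(CLINT \<omega>|M. iexp (\<Sum>i\<in>F. c i * W i \<omega>)) =
          complex_of_real (exp (- (\<Sum>i\<in>F. \<Sum>j\<in>F. c i * c j * K i j) / 2))"
    proof (cases "k \<in> F")
      case False then show ?thesis using F by (intro centred_gaussian_char[OF cg]) auto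
    next
      case True
      define F' where "F' = F - {k}"
      have F': "finite F'" "F' \<subseteq> A" "k \<notin> F'" "F = insert k F'"
        using F True k unfolding F'_def by auto
      define S where "S n \<omega> = c k * (\<Sum>m\<in>G. \<alpha> n m * W (g n m) \<omega>) + (\<Sum>b\<in>F'. c b * W b \<omega>)" for n \<omega>
      define Q where "Q n = c k * c k * (\<Sum>m\<in>G. \<Sum>m'\<in>G. \<alpha> n m * \<alpha> n m' * K (g n m) (g n m'))
          + 2 * c k * (\<Sum>b\<in>F'. c b * (\<Sum>m\<in>G. \<alpha> n m * K (g n m) b))
          + (\<Sum>b\<in>F'. \<Sum>b'\<in>F'. c b * c b' * K b b')" for n
      have char_S: "(CLINT \<omega>|M. iexp (S n \<omega>)) = complex_of_real (exp (- Q n / 2))" for n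
        unfolding S_def Q_def using G F' by (intro centred_gaussian_char_add_combination[OF cg sym]) auto
      have "(\<lambda>n. CLINT \<omega>|M. iexp (S n \<omega>)) \<longlonglongrightarrow> (CLINT \<omega>|M. iexp (\<Sum>i\<in>F. c i * W i \<omega>))"
      proof (rule iexp_integral_LIMSEQ[OF P])
        show "S n \<in> borel_measurable M" for n
          unfolding S_def using F'(2)
          by (intro borel_measurable_add borel_measurable_times borel_measurable_const
              borel_measurable_sum mWg mW) auto
        show "(\<lambda>\<omega>. \<Sum>i\<in>F. c i * W i \<omega>) \<in> borel_measurable M"
          using F(2) mk mW by (intro borel_measurable_sum borel_measurable_times) auto
        show "(\<lambda>n. S n \<omega>) \<longlonglongrightarrow> (\<Sum>i\<in>F. c i * W i \<omega>)" if "\<omega> \<in> space M" for \<omega>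
          unfolding S_def F'(4) using F' that by (auto intro!: tendsto_intros lim)
      qed
      moreover have Q: "Q \<longlonglongrightarrow> (\<Sum>i\<in>F. \<Sum>j\<in>F. c i * c j * K i j)"
        unfolding Q_def F'(4) quadratic_form_insert[OF sym F'(1,3)]
        using F'(2) by (intro tendsto_intros var cross) auto
      then have "(\<lambda>n. CLINT \<omega>|M. iexp (S n \<omega>))
          \<longlonglongrightarrow> complex_of_real (exp (- (\<Sum>i\<in>F. \<Sum>j\<in>F. c i * c j * K i j) / 2))"
        unfolding char_S by (intro tendsto_intros Q) simp
      ultimately show ?thesis by (rule LIMSEQ_unique)
    qed
  qed
qed

lemma matrix_inv_left:
  fixes A :: "'a::semiring_1^'n^'m"
  assumes "invertible A"
  shows "matrix_inv A ** A = mat 1"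
  using someI_ex[OF assms[unfolded invertible_def]] unfolding matrix_inv_def by blast

lemma matrix_inv_unique:
  fixes A :: "'a::semiring_1^'n^'n"
  assumes "A ** B = mat 1" and "B ** A = mat 1"
  shows "matrix_inv A = B"
proof -
  have inv: "invertible A" using assms unfolding invertible_def by blast
  have "matrix_inv A = matrix_inv A ** (A ** B)" by (simp add: assms)
  also have "\<dots> = B" by (simp add: matrix_mul_assoc matrix_inv_left[OF inv])
  finally show ?thesis .
qed

section \<open>Gaussian regression\<close>

text \<open>If \<open>P C = 1\<close> with \<open>C = Cov(Y)\<close> symmetric and \<open>\<beta> q = Cov(Z\<^sub>q, Y)\<close>, the covariance of the residuals
  \<open>Z\<^sub>q - \<beta>\<^sub>q P Y\<close>: both cross terms equal \<open>\<beta> P \<beta>'\<close> and the quadratic term cancels one of them.\<close>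

lemma regression_residual_covariance:
  fixes P C :: "real^'p::finite^'p" and \<beta> :: "'q \<Rightarrow> 'p \<Rightarrow> real"
  assumes PC: "P ** C = mat 1" and C_sym: "\<And>a b. C$a$b = C$b$a"
  shows "z + (\<Sum>p'\<in>UNIV. - (\<Sum>p\<in>UNIV. \<beta> q p * P$p$p') * \<beta> q' p')
           + (\<Sum>p'\<in>UNIV. - (\<Sum>p\<in>UNIV. \<beta> q' p * P$p$p') * \<beta> q p')
           + (\<Sum>p'\<in>UNIV. \<Sum>p''\<in>UNIV. (- (\<Sum>p\<in>UNIV. \<beta> q p * P$p$p'))
               * (- (\<Sum>p\<in>UNIV. \<beta> q' p * P$p$p'')) * C$p'$p'')
         = z - (\<Sum>p\<in>UNIV. \<Sum>p'\<in>UNIV. \<beta> q' p * P$p$p' * \<beta> q p')"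
proof -
  define \<gamma> where "\<gamma> q p' = (\<Sum>p\<in>UNIV. \<beta> q p * P$p$p')" for q p'
  have \<gamma>C: "(\<Sum>p''\<in>UNIV. \<gamma> q' p'' * C$p'$p'') = \<beta> q' p'" for p'
  proof -
    have "(\<Sum>p''\<in>UNIV. \<gamma> q' p'' * C$p'$p'') = (\<Sum>p''\<in>UNIV. \<Sum>p\<in>UNIV. \<beta> q' p * (P$p$p'' * C$p''$p'))"
      unfolding \<gamma>_def by (simp add: sum_distrib_right C_sym[of p'] mult.assoc)
    also have "\<dots> = (\<Sum>p\<in>UNIV. \<beta> q' p * (P ** C)$p$p')"
      by (subst sum.swap) (simp add: sum_distrib_left matrix_matrix_mult_def)
    also have "\<dots> = \<beta> q' p'"
      by (simp add: PC mat_def if_distrib[of "\<lambda>x. _ * x"] sum.delta' cong: if_cong)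
    finally show ?thesis .
  qed
  have "(\<Sum>p'\<in>UNIV. \<Sum>p''\<in>UNIV. (- \<gamma> q p') * (- \<gamma> q' p'') * C$p'$p'') = (\<Sum>p'\<in>UNIV. \<gamma> q p' * \<beta> q' p')"
    by (simp add: \<gamma>C[symmetric] sum_distrib_left mult.assoc)
  moreover have "(\<Sum>p\<in>UNIV. \<Sum>p'\<in>UNIV. \<beta> q' p * P$p$p' * \<beta> q p') = (\<Sum>p'\<in>UNIV. \<gamma> q' p' * \<beta> q p')"
    unfolding \<gamma>_def by (subst sum.swap) (simp add: sum_distrib_right)
  ultimately show ?thesis unfolding \<gamma>_def[symmetric] by (simp add: sum_negf)
qed

lemma sum_UNIV_sum:
  "sum f (UNIV :: ('a::finite + 'b::finite) set) = (\<Sum>x\<in>UNIV. f (Inl x)) + (\<Sum>x\<in>UNIV. f (Inr x))"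
proof -
  have "sum f (UNIV :: ('a + 'b) set) = sum f (UNIV <+> UNIV)" by (simp add: UNIV_Plus_UNIV)
  also have "\<dots> = (\<Sum>x\<in>UNIV. f (Inl x)) + (\<Sum>x\<in>UNIV. f (Inr x))" by (subst sum.Plus) (auto simp: o_def)
  finally show ?thesis .
qed

text \<open>The residual \<open>Z\<^sub>q - \<beta>\<^sub>q P Y\<close> as a linear combination of the joint family \<open>(Y, Z)\<close>,
  indexed by \<open>'p + 'q\<close>.\<close>

definition regress_coeff :: "('q \<Rightarrow> 'p::finite \<Rightarrow> real) \<Rightarrow> real^'p^'p \<Rightarrow> 'q \<Rightarrow> 'p + 'q \<Rightarrow> real" where
  "regress_coeff \<beta> P q = case_sum (\<lambda>p'. - (\<Sum>p\<in>UNIV. \<beta> q p * P $ p $ p')) (\<lambda>q'. if q' = q then 1 else 0)"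

lemma regress_coeff_quadratic_form:
  fixes P C :: "real^'p::finite^'p" and K :: "'p + 'q::finite \<Rightarrow> 'p + 'q \<Rightarrow> real"
  assumes PC: "P ** C = mat 1" and K_sym: "\<And>a b. K a b = K b a"
    and K_YY: "\<And>x y. K (Inl x) (Inl y) = C$x$y" and K_ZY: "\<And>q p. K (Inr q) (Inl p) = \<beta> q p"
  shows "(\<Sum>m\<in>UNIV. \<Sum>m'\<in>UNIV. regress_coeff \<beta> P q m * regress_coeff \<beta> P q' m' * K m m')
    = K (Inr q) (Inr q') - (\<Sum>p\<in>UNIV. \<Sum>p'\<in>UNIV. \<beta> q' p * P$p$p' * \<beta> q p')"
proof -
  have K_YZ: "K (Inl p) (Inr q1) = \<beta> q1 p" for q1 p using K_ZY K_sym by metis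
  have C_sym: "C$a$b = C$b$a" for a b using K_YY K_sym by metis
  have sum_if: "(\<Sum>x\<in>A. if c then f x else 0) = (if c then sum f A else (0::real))" for A c f
    by simp
  have "(\<Sum>m\<in>UNIV. \<Sum>m'\<in>UNIV. regress_coeff \<beta> P q m * regress_coeff \<beta> P q' m' * K m m')
    = K (Inr q) (Inr q') + (\<Sum>p'\<in>UNIV. - (\<Sum>p\<in>UNIV. \<beta> q p * P$p$p') * \<beta> q' p')
      + (\<Sum>p'\<in>UNIV. - (\<Sum>p\<in>UNIV. \<beta> q' p * P$p$p') * \<beta> q p')
      + (\<Sum>p'\<in>UNIV. \<Sum>p''\<in>UNIV. (- (\<Sum>p\<in>UNIV. \<beta> q p * P$p$p'))
          * (- (\<Sum>p\<in>UNIV. \<beta> q' p * P$p$p'')) * C$p'$p'')"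
    unfolding sum_UNIV_sum sum.distrib K_YY K_ZY K_YZ regress_coeff_def sum.case
    by (simp add: sum_if if_distrib[of "\<lambda>x. x * _"] if_distrib[of "\<lambda>x. _ * x"] if_distrib[of uminus]
        sum.delta sum.delta' sum.distrib algebra_simps cong: if_cong)
  also have "\<dots> = K (Inr q) (Inr q') - (\<Sum>p\<in>UNIV. \<Sum>p'\<in>UNIV. \<beta> q' p * P$p$p' * \<beta> q p')"
    by (rule regression_residual_covariance[OF PC C_sym])
  finally show ?thesis .
qed

lemma centred_gaussian_regress:
  fixes W :: "'i \<Rightarrow> 'a \<Rightarrow> real" and gy :: "'p::finite \<Rightarrow> 'i" and gz :: "'q::finite \<Rightarrow> 'i"
  assumes P: "prob_space M" and cg: "centred_gaussian M W I K"
    and K_sym: "\<And>i j. K i j = K j i" and gy: "range gy \<subseteq> I" and gz: "range gz \<subseteq> I"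
    and inv: "invertible (\<chi> p p'. K (gy p) (gy p') :: real^'p^'p)"
  shows "centred_gaussian M (regress M (\<lambda>p. W (gy p)) (\<lambda>q. W (gz q))) UNIV
    (\<lambda>q q'. K (gz q) (gz q')
       - (\<Sum>p\<in>UNIV. \<Sum>p'\<in>UNIV. K (gz q') (gy p)
            * matrix_inv (\<chi> p p'. K (gy p) (gy p') :: real^'p^'p) $ p $ p' * K (gz q) (gy p')))"
proof -
  define C where "C = (\<chi> p p'. K (gy p) (gy p') :: real^'p^'p)"
  define \<beta> where "\<beta> q p = K (gz q) (gy p)" for q p
  define g where "g = case_sum gy gz"
  have cov: "gcov M (W i) (W j) = K i j" if "i \<in> I" "j \<in> I" for i j
    using centred_gaussian_covariance[OF P cg that K_sym] .
  have "regress M (\<lambda>p. W (gy p)) (\<lambda>q. W (gz q)) q \<omega>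
      = (\<Sum>m\<in>UNIV. regress_coeff \<beta> (matrix_inv C) q m * W (g m) \<omega>)" for q \<omega>
  proof -
    have "(\<Sum>m\<in>UNIV. regress_coeff \<beta> (matrix_inv C) q m * W (g m) \<omega>)
        = (\<Sum>p'\<in>UNIV. - (\<Sum>p\<in>UNIV. \<beta> q p * matrix_inv C $ p $ p') * W (gy p') \<omega>) + W (gz q) \<omega>"
      by (simp add: sum_UNIV_sum regress_coeff_def g_def if_distrib[of "\<lambda>x. x * _"] sum.delta'
          cong: if_cong)
    also have "\<dots> = regress M (\<lambda>p. W (gy p)) (\<lambda>q. W (gz q)) q \<omega>"
      unfolding regress_def \<beta>_def C_def using gy gz
      by (subst sum.swap) (simp add: cov subset_iff sum_distrib_right sum_negf)
    finally show ?thesis ..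
  qed
  then have "centred_gaussian M (regress M (\<lambda>p. W (gy p)) (\<lambda>q. W (gz q))) UNIV
      (\<lambda>q q'. \<Sum>m\<in>UNIV. \<Sum>m'\<in>UNIV. regress_coeff \<beta> (matrix_inv C) q m
        * regress_coeff \<beta> (matrix_inv C) q' m' * K (g m) (g m'))"
    using gy gz
    by (intro centred_gaussian_linear_image[OF cg]) (auto simp: g_def subset_iff split: sum.splits)
  moreover note regress_coeff_quadratic_form[OF matrix_inv_left[OF inv[folded C_def]],
      of "\<lambda>m m'. K (g m) (g m')" \<beta>]
  ultimately show ?thesis unfolding \<beta>_def C_def g_def by (simp add: K_sym)
qed

section \<open>The jet of an isotropic field\<close>

text \<open>\<open>Pt s\<close>, \<open>D1 s i\<close>, \<open>D2 s i j\<close> index \<open>X(s)\<close>, \<open>\<partial>\<^sub>iX(s)\<close> and \<open>\<partial>\<^sub>i\<partial>\<^sub>jX(s)\<close>.\<close>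

datatype ('n::finite) jet_idx = Pt "real^'n" | D1 "real^'n" 'n | D2 "real^'n" 'n 'n

definition kdelta :: "'n \<Rightarrow> 'n \<Rightarrow> real" where "kdelta i j = (if i = j then 1 else 0)"

lemma kdelta_sym: "kdelta i j = kdelta j i" by (simp add: kdelta_def)

text \<open>Derivatives of \<open>\<tau> \<mapsto> r(\<parallel>\<tau>\<parallel>\<^sup>2)\<close>, where \<open>r k\<close> is the \<open>k\<close>-th derivative of \<open>r\<close>; they give the
  covariances of the jet of \<open>X\<close> at two points with displacement \<open>\<tau>\<close>.\<close>

definition k00 :: "(nat \<Rightarrow> real \<Rightarrow> real) \<Rightarrow> real^'n::finite \<Rightarrow> real" where
  "k00 r \<tau> = r 0 (norm \<tau>^2)"

definition k10 :: "(nat \<Rightarrow> real \<Rightarrow> real) \<Rightarrow> 'n::finite \<Rightarrow> real^'n \<Rightarrow> real" where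
  "k10 r i \<tau> = 2 * r 1 (norm \<tau>^2) * \<tau>$i"

definition k11 :: "(nat \<Rightarrow> real \<Rightarrow> real) \<Rightarrow> 'n::finite \<Rightarrow> 'n \<Rightarrow> real^'n \<Rightarrow> real" where
  "k11 r i j \<tau> = -4 * r 2 (norm \<tau>^2) * \<tau>$i * \<tau>$j - 2 * r 1 (norm \<tau>^2) * kdelta i j"

definition k21 :: "(nat \<Rightarrow> real \<Rightarrow> real) \<Rightarrow> 'n::finite \<Rightarrow> 'n \<Rightarrow> 'n \<Rightarrow> real^'n \<Rightarrow> real" where
  "k21 r i j k \<tau> = -8 * r 3 (norm \<tau>^2) * \<tau>$i * \<tau>$j * \<tau>$k
     - 4 * r 2 (norm \<tau>^2) * (kdelta i j * \<tau>$k + kdelta i k * \<tau>$j + kdelta j k * \<tau>$i)"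

definition k22 :: "(nat \<Rightarrow> real \<Rightarrow> real) \<Rightarrow> 'n::finite \<Rightarrow> 'n \<Rightarrow> 'n \<Rightarrow> 'n \<Rightarrow> real^'n \<Rightarrow> real" where
  "k22 r i j k l \<tau> = 16 * r 4 (norm \<tau>^2) * \<tau>$i * \<tau>$j * \<tau>$k * \<tau>$l
     + 8 * r 3 (norm \<tau>^2) * (kdelta i j * \<tau>$k * \<tau>$l + kdelta i k * \<tau>$j * \<tau>$l
       + kdelta i l * \<tau>$j * \<tau>$k + kdelta j k * \<tau>$i * \<tau>$l + kdelta j l * \<tau>$i * \<tau>$k
       + kdelta k l * \<tau>$i * \<tau>$j)
     + 4 * r 2 (norm \<tau>^2) * (kdelta i j * kdelta k l + kdelta i k * kdelta j l + kdelta i l * kdelta j k)"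

fun jet_cov :: "(nat \<Rightarrow> real \<Rightarrow> real) \<Rightarrow> ('n::finite) jet_idx \<Rightarrow> 'n jet_idx \<Rightarrow> real" where
  "jet_cov r (Pt x) (Pt y) = k00 r (x - y)"
| "jet_cov r (D1 x i) (Pt y) = k10 r i (x - y)"
| "jet_cov r (Pt x) (D1 y j) = - k10 r j (x - y)"
| "jet_cov r (D1 x i) (D1 y j) = k11 r i j (x - y)"
| "jet_cov r (D2 x i j) (D1 y k) = k21 r i j k (x - y)"
| "jet_cov r (D1 x k) (D2 y i j) = - k21 r i j k (x - y)"
| "jet_cov r (D2 x i j) (D2 y k l) = k22 r i j k l (x - y)"
| "jet_cov r (Pt x) (D2 y i j) = 0"
| "jet_cov r (D2 x i j) (Pt y) = 0"

lemma jet_cov_sym: "jet_cov r a b = jet_cov r b a"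
proof -
  have n: "norm (y - x) = norm (x - y)" for x y :: "real^'n" by (rule norm_minus_commute)
  have c: "(y - x) $ i = - ((x - y) $ i)" for x y :: "real^'n" and i by simp
  show ?thesis
    by (cases a; cases b) (auto simp: k00_def k10_def k11_def k21_def k22_def n c kdelta_sym algebra_simps)
qed

lemma norm_add_axis_sq:
  "norm (\<tau> + h *\<^sub>R axis i (1::real))^2 = norm (\<tau>::real^'n)^2 + 2*h*\<tau>$i + h^2"
  unfolding power2_norm_eq_inner
  by (simp add: inner_add_left inner_add_right inner_axis inner_axis' power2_eq_square algebra_simps)

lemma add_axis_component_has_derivative:
  "D = kdelta i m \<Longrightarrow> ((\<lambda>h. (\<tau> + h *\<^sub>R axis i (1::real)) $ m) has_real_derivative D) (at 0)"
  by (auto simp: kdelta_def axis_def intro!: derivative_eq_intros)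

lemma r_norm_add_axis_has_derivative:
  assumes dr: "\<forall>k<4. \<forall>x\<ge>0. (r k has_real_derivative r (Suc k) x) (at x within {0..})"
    and k: "k < 4" and D: "D = r (Suc k) (norm \<tau>^2) * (2 * \<tau>$i)"
  shows "((\<lambda>h. r k (norm (\<tau> + h *\<^sub>R axis i (1::real))^2)) has_real_derivative D) (at 0)"
proof -
  let ?g = "\<lambda>h. norm (\<tau> + h *\<^sub>R axis i (1::real))^2"
  have g: "(?g has_real_derivative 2 * \<tau>$i) (at 0)"
    unfolding norm_add_axis_sq by (auto intro!: derivative_eq_intros)
  have "(r k has_real_derivative r (Suc k) (?g 0)) (at (?g 0) within {0..})"
    using dr k by simp
  then have "(r k has_real_derivative r (Suc k) (?g 0)) (at (?g 0) within (?g ` UNIV))"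
    by (rule has_field_derivative_subset) auto
  from DERIV_image_chain[OF this g] show ?thesis using D by (simp add: o_def mult.commute)
qed

context
  fixes r :: "nat \<Rightarrow> real \<Rightarrow> real"
  assumes dr: "\<forall>k<4. \<forall>x\<ge>0. (r k has_real_derivative r (Suc k) x) (at x within {0..})"
begin

lemmas r_deriv = r_norm_add_axis_has_derivative[OF dr]

lemma k00_has_derivative: "((\<lambda>h. k00 r (\<tau> + h *\<^sub>R axis i 1)) has_real_derivative k10 r i \<tau>) (at 0)"
  unfolding k00_def k10_def by (rule r_deriv) (auto simp: algebra_simps)

lemma k10_has_derivative: "((\<lambda>h. - k10 r j (\<tau> + h *\<^sub>R axis i 1)) has_real_derivative k11 r i j \<tau>) (at 0)"
  unfolding k10_def k11_def
  by (rule derivative_eq_intros r_deriv add_axis_component_has_derivative refl | simp)+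
    (simp add: algebra_simps numeral_2_eq_2)

lemma k11_has_derivative: "((\<lambda>h. k11 r j k (\<tau> + h *\<^sub>R axis i 1)) has_real_derivative k21 r i j k \<tau>) (at 0)"
  unfolding k11_def k21_def
  by (rule derivative_eq_intros r_deriv add_axis_component_has_derivative refl | simp)+
    (simp add: algebra_simps numeral_2_eq_2)

lemma k21_has_derivative:
  "((\<lambda>h. - k21 r k l j (\<tau> + h *\<^sub>R axis i 1)) has_real_derivative k22 r i j k l \<tau>) (at 0)"
  unfolding k21_def k22_def
  by (rule derivative_eq_intros r_deriv add_axis_component_has_derivative refl | simp)+
    (simp add: algebra_simps kdelta_sym[of k j] kdelta_sym[of l j])

end

definition step_seq :: "nat \<Rightarrow> real" where "step_seq n = 1 / real (Suc n)"

lemma step_seq_pos: "step_seq n > 0" by (simp add: step_seq_def)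

lemma step_seq_LIMSEQ: "step_seq \<longlonglongrightarrow> 0"
  unfolding step_seq_def using LIMSEQ_inverse_real_of_nat by (simp add: inverse_eq_divide)

lemma difference_quotient_LIMSEQ:
  assumes "(f has_real_derivative D) (at 0)"
  shows "(\<lambda>n. (f (step_seq n) - f 0) / step_seq n) \<longlonglongrightarrow> D"
proof -
  have "((\<lambda>y. (f y - f 0) / (y - 0)) \<longlongrightarrow> D) (at 0)" using assms by (simp add: has_field_derivative_iff)
  moreover have "filterlim step_seq (at 0) sequentially"
    using step_seq_LIMSEQ step_seq_pos
    by (auto simp: filterlim_at intro!: always_eventually dest: less_imp_neq[symmetric])
  ultimately show ?thesis using filterlim_compose by fastforce
qed

lemma step_seq_sq_at_0: "filterlim (\<lambda>n. (step_seq n)\<^sup>2) (at 0 within {0..}) sequentially"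
proof -
  have "(\<lambda>n. (step_seq n)\<^sup>2) \<longlonglongrightarrow> 0" using tendsto_power[OF step_seq_LIMSEQ, of 2] by simp
  then show ?thesis
    using step_seq_pos by (auto simp: filterlim_at intro!: always_eventually dest: less_imp_neq[symmetric])
qed

lemma difference_quotient_sq_LIMSEQ:
  assumes "(f has_real_derivative D) (at 0 within {0..})"
  shows "(\<lambda>n. (f ((step_seq n)\<^sup>2) - f 0) / (step_seq n)\<^sup>2) \<longlonglongrightarrow> D"
proof -
  have "((\<lambda>y. (f y - f 0) / (y - 0)) \<longlongrightarrow> D) (at 0 within {0..})"
    using assms by (simp add: has_field_derivative_iff)
  from filterlim_compose[OF this step_seq_sq_at_0] show ?thesis by simp
qed

lemma continuous_step_seq_sq_LIMSEQ:
  assumes "(f has_real_derivative D) (at 0 within {0..})"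
  shows "(\<lambda>n. f ((step_seq n)\<^sup>2)) \<longlonglongrightarrow> f 0"
proof -
  have "(f \<longlongrightarrow> f 0) (at 0 within {0..})"
    using DERIV_continuous[OF assms] by (simp add: continuous_within)
  from filterlim_compose[OF this step_seq_sq_at_0] show ?thesis .
qed

lemma sum_bool_difference_quotient:
  "(\<Sum>m\<in>UNIV. (if m then 1 else -1) / h * f m) = (f True - f False) / (h::real)"
  by (simp add: UNIV_bool diff_divide_distrib)

lemma sum_bool_difference_quotient2:
  "h \<noteq> 0 \<Longrightarrow> (\<Sum>m\<in>UNIV. \<Sum>m'\<in>UNIV. (if m then 1 else -1) / h * ((if m' then 1 else -1) / h) * f m m')
   = (f True True - f True False - f False True + f False False) / (h::real)\<^sup>2"
  by (simp add: UNIV_bool power2_eq_square) (simp add: field_simps)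

section \<open>The jet is a Gaussian family\<close>

lemma centred_gaussian_insert_derivative:
  fixes e :: "real \<Rightarrow> 'i"
  assumes P: "prob_space M" and cg: "centred_gaussian M W A K"
    and sym: "\<And>a b. K a b = K b a" and k: "k \<notin> A" and e: "\<And>h. e h \<in> A"
    and deriv_W: "\<And>\<omega>. \<omega> \<in> space M \<Longrightarrow> ((\<lambda>h. W (e h) \<omega>) has_real_derivative W k \<omega>) (at 0)"
    and deriv_K: "\<And>b. b \<in> A \<Longrightarrow> ((\<lambda>h. K (e h) b) has_real_derivative K k b) (at 0)"
    and var: "(\<lambda>n. (K (e (step_seq n)) (e (step_seq n)) - K (e (step_seq n)) (e 0)
        - K (e 0) (e (step_seq n)) + K (e 0) (e 0)) / (step_seq n)\<^sup>2) \<longlonglongrightarrow> K k k"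
  shows "centred_gaussian M W (insert k A) K"
proof (rule centred_gaussian_insert_limit[OF P cg sym k, where G=UNIV and
      g="\<lambda>n m. e (if m then step_seq n else 0)" and \<alpha>="\<lambda>n m. (if m then 1 else -1) / step_seq n"])
  show "(\<lambda>n. \<Sum>m\<in>UNIV. (if m then 1 else -1) / step_seq n * W (e (if m then step_seq n else 0)) \<omega>)
      \<longlonglongrightarrow> W k \<omega>" if "\<omega> \<in> space M" for \<omega>
    unfolding sum_bool_difference_quotient using difference_quotient_LIMSEQ[OF deriv_W[OF that]] by simp
  show "(\<lambda>n. \<Sum>m\<in>UNIV. (if m then 1 else -1) / step_seq n * K (e (if m then step_seq n else 0)) b)
      \<longlonglongrightarrow> K k b" if "b \<in> A" for b
    unfolding sum_bool_difference_quotient using difference_quotient_LIMSEQ[OF deriv_K[OF that]] by simp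
  show "(\<lambda>n. \<Sum>m\<in>UNIV. \<Sum>m'\<in>UNIV. (if m then 1 else -1) / step_seq n * ((if m' then 1 else -1) / step_seq n)
      * K (e (if m then step_seq n else 0)) (e (if m' then step_seq n else 0))) \<longlonglongrightarrow> K k k"
    by (subst sum_bool_difference_quotient2) (use var step_seq_pos in \<open>auto simp: less_imp_neq[symmetric]\<close>)
qed (use e in auto)

definition jet_field :: "(real^'n::finite \<Rightarrow> 'a \<Rightarrow> real) \<Rightarrow> 'n jet_idx \<Rightarrow> 'a \<Rightarrow> real" where
  "jet_field X a \<omega> = (case a of Pt s \<Rightarrow> X s \<omega> | D1 s i \<Rightarrow> partial i (\<lambda>s. X s \<omega>) s
      | D2 s i j \<Rightarrow> partial i (partial j (\<lambda>s. X s \<omega>)) s)"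

definition D1_idx :: "'n::finite jet_idx set" where "D1_idx = {D1 s i | s i. True}"
definition D2_idx :: "'n::finite jet_idx set" where "D2_idx = {D2 s i j | s i j. True}"

lemma norm_scaleR_axis_sq: "norm (h *\<^sub>R axis i (1::real))^2 = h^2"
  by (simp add: power2_eq_square)

lemma scaleR_axis_nth: "(h *\<^sub>R axis i (1::real)) $ j = h * kdelta i j"
  by (simp add: axis_def kdelta_def)

lemma axis_nth_kdelta: "axis i (1::real) $ j = kdelta i j"
  by (simp add: axis_def kdelta_def)

lemma add_scaleR_diff_commute: "s + h *\<^sub>R v - y = (s - y) + h *\<^sub>R (v::real^'n)"
  by (simp add: algebra_simps)

context
  fixes M :: "'a measure" and X :: "real^'n::finite \<Rightarrow> 'a \<Rightarrow> real" and r :: "nat \<Rightarrow> real \<Rightarrow> real"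
  assumes P: "prob_space M"
    and gauss: "centred_gaussian M X UNIV (\<lambda>s t. r 0 ((norm (s - t))^2))"
    and paths: "\<forall>\<omega>\<in>space M. C2_fun (\<lambda>s. X s \<omega>)"
    and dr: "\<forall>k<4. \<forall>x\<ge>0. (r k has_real_derivative r (Suc k) x) (at x within {0..})"
begin

lemma jet_field_gaussian_Pt: "centred_gaussian M (jet_field X) (range Pt) (jet_cov r)"
  by (rule centred_gaussian_reindex[OF gauss]) (auto simp: jet_field_def k00_def inj_on_def)

lemma jet_field_gaussian_insert_D1:
  assumes cg: "centred_gaussian M (jet_field X) A (jet_cov r)" and k: "D1 s i \<notin> A"
    and Pt: "range Pt \<subseteq> A" and A: "A \<subseteq> range Pt \<union> D1_idx"
  shows "centred_gaussian M (jet_field X) (insert (D1 s i) A) (jet_cov r)"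
proof (rule centred_gaussian_insert_derivative[OF P cg jet_cov_sym k, where e="\<lambda>h. Pt (s + h *\<^sub>R axis i 1)"])
  show "((\<lambda>h. jet_field X (Pt (s + h *\<^sub>R axis i 1)) \<omega>) has_real_derivative jet_field X (D1 s i) \<omega>) (at 0)"
    if "\<omega> \<in> space M" for \<omega>
    using paths that unfolding C2_fun_def jet_field_def by auto
  show "((\<lambda>h. jet_cov r (Pt (s + h *\<^sub>R axis i 1)) b) has_real_derivative jet_cov r (D1 s i) b) (at 0)"
    if "b \<in> A" for b
    using that A k00_has_derivative[OF dr, of "s - _" i] k10_has_derivative[OF dr, of _ "s - _" i]
    by (auto simp: D1_idx_def add_scaleR_diff_commute)
  have "(\<lambda>n. (r 0 ((step_seq n)\<^sup>2) - r 0 0) / (step_seq n)\<^sup>2) \<longlonglongrightarrow> r 1 0"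
    by (rule difference_quotient_sq_LIMSEQ) (use dr in auto)
  from tendsto_mult[OF tendsto_const this, of "-2"]
  show "(\<lambda>n. (jet_cov r (Pt (s + step_seq n *\<^sub>R axis i 1)) (Pt (s + step_seq n *\<^sub>R axis i 1))
      - jet_cov r (Pt (s + step_seq n *\<^sub>R axis i 1)) (Pt (s + 0 *\<^sub>R axis i 1))
      - jet_cov r (Pt (s + 0 *\<^sub>R axis i 1)) (Pt (s + step_seq n *\<^sub>R axis i 1))
      + jet_cov r (Pt (s + 0 *\<^sub>R axis i 1)) (Pt (s + 0 *\<^sub>R axis i 1))) / (step_seq n)\<^sup>2)
    \<longlonglongrightarrow> jet_cov r (D1 s i) (D1 s i)"
    by (simp add: k00_def k11_def kdelta_def norm_scaleR_axis_sq diff_divide_distrib)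
qed (use Pt in auto)

lemma jet_field_gaussian_insert_D2:
  assumes cg: "centred_gaussian M (jet_field X) A (jet_cov r)" and k: "D2 s i j \<notin> A"
    and D1: "D1_idx \<subseteq> A" and A: "A \<subseteq> D1_idx \<union> D2_idx"
  shows "centred_gaussian M (jet_field X) (insert (D2 s i j) A) (jet_cov r)"
proof (rule centred_gaussian_insert_derivative[OF P cg jet_cov_sym k, where e="\<lambda>h. D1 (s + h *\<^sub>R axis i 1) j"])
  show "((\<lambda>h. jet_field X (D1 (s + h *\<^sub>R axis i 1) j) \<omega>) has_real_derivative jet_field X (D2 s i j) \<omega>) (at 0)"
    if "\<omega> \<in> space M" for \<omega>
    using paths that unfolding C2_fun_def jet_field_def by auto
  show "((\<lambda>h. jet_cov r (D1 (s + h *\<^sub>R axis i 1) j) b) has_real_derivative jet_cov r (D2 s i j) b) (at 0)"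
    if "b \<in> A" for b
    using that A k11_has_derivative[OF dr, of j _ "s - _" i] k21_has_derivative[OF dr, of _ _ j "s - _" i]
    by (auto simp: D1_idx_def D2_idx_def add_scaleR_diff_commute)
  have l1: "(\<lambda>n. (r 1 ((step_seq n)\<^sup>2) - r 1 0) / (step_seq n)\<^sup>2) \<longlonglongrightarrow> r 2 0"
    by (rule difference_quotient_sq_LIMSEQ) (use dr in \<open>auto simp: numeral_2_eq_2\<close>)
  have l2: "(\<lambda>n. r 2 ((step_seq n)\<^sup>2)) \<longlonglongrightarrow> r 2 0"
    by (rule continuous_step_seq_sq_LIMSEQ[where D="r 3 0"])
      (use dr in \<open>auto simp: numeral_3_eq_3 numeral_2_eq_2\<close>)
  have "jet_cov r (D2 s i j) (D2 s i j) = 8 * r 2 0 * kdelta i j + 4 * r 2 0"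
    by (simp add: k22_def kdelta_def)
  then have lim: "(\<lambda>n. 8 * r 2 ((step_seq n)\<^sup>2) * kdelta i j
      + 4 * ((r 1 ((step_seq n)\<^sup>2) - r 1 0) / (step_seq n)\<^sup>2)) \<longlonglongrightarrow> jet_cov r (D2 s i j) (D2 s i j)"
    using tendsto_add[OF tendsto_mult[OF tendsto_mult[OF tendsto_const l2] tendsto_const]
        tendsto_mult[OF tendsto_const l1], of 8 "kdelta i j" 4] by simp
  have "(jet_cov r (D1 (s + h *\<^sub>R axis i 1) j) (D1 (s + h *\<^sub>R axis i 1) j)
      - jet_cov r (D1 (s + h *\<^sub>R axis i 1) j) (D1 (s + 0 *\<^sub>R axis i 1) j)
      - jet_cov r (D1 (s + 0 *\<^sub>R axis i 1) j) (D1 (s + h *\<^sub>R axis i 1) j)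
      + jet_cov r (D1 (s + 0 *\<^sub>R axis i 1) j) (D1 (s + 0 *\<^sub>R axis i 1) j)) / h\<^sup>2
    = 8 * r 2 (h\<^sup>2) * kdelta i j + 4 * ((r 1 (h\<^sup>2) - r 1 0) / h\<^sup>2)" if "h \<noteq> 0" for h
    using that by (simp add: k11_def norm_scaleR_axis_sq scaleR_axis_nth axis_nth_kdelta)
      (simp add: kdelta_def field_simps power2_eq_square)
  with lim show "(\<lambda>n. (jet_cov r (D1 (s + step_seq n *\<^sub>R axis i 1) j) (D1 (s + step_seq n *\<^sub>R axis i 1) j)
      - jet_cov r (D1 (s + step_seq n *\<^sub>R axis i 1) j) (D1 (s + 0 *\<^sub>R axis i 1) j)
      - jet_cov r (D1 (s + 0 *\<^sub>R axis i 1) j) (D1 (s + step_seq n *\<^sub>R axis i 1) j)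
      + jet_cov r (D1 (s + 0 *\<^sub>R axis i 1) j) (D1 (s + 0 *\<^sub>R axis i 1) j)) / (step_seq n)\<^sup>2)
    \<longlonglongrightarrow> jet_cov r (D2 s i j) (D2 s i j)"
    using step_seq_pos by (simp add: less_imp_neq[symmetric])
qed (use D1 in \<open>auto simp: D1_idx_def\<close>)

lemma jet_field_gaussian_D1: "centred_gaussian M (jet_field X) (range Pt \<union> D1_idx) (jet_cov r)"
proof (rule centred_gaussian_union_finite)
  fix F :: "'n jet_idx set" assume "finite F" "F \<subseteq> D1_idx"
  then show "centred_gaussian M (jet_field X) (range Pt \<union> F) (jet_cov r)"
  proof (induction F rule: finite_induct)
    case empty then show ?case using jet_field_gaussian_Pt by simp
  next
    case (insert x F)
    then obtain s i where x: "x = D1 s i" by (auto simp: D1_idx_def)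
    have "centred_gaussian M (jet_field X) (insert (D1 s i) (range Pt \<union> F)) (jet_cov r)"
      by (rule jet_field_gaussian_insert_D1) (use insert x in \<open>auto simp: D1_idx_def\<close>)
    then show ?case using x by simp
  qed
qed

lemma jet_field_gaussian: "centred_gaussian M (jet_field X) (D1_idx \<union> D2_idx) (jet_cov r)"
proof (rule centred_gaussian_union_finite)
  fix F :: "'n jet_idx set" assume "finite F" "F \<subseteq> D2_idx"
  then show "centred_gaussian M (jet_field X) (D1_idx \<union> F) (jet_cov r)"
  proof (induction F rule: finite_induct)
    case empty then show ?case using centred_gaussian_subset[OF jet_field_gaussian_D1] by simp
  next
    case (insert x F)
    then obtain s i j where x: "x = D2 s i j" by (auto simp: D2_idx_def)
    have "centred_gaussian M (jet_field X) (insert (D2 s i j) (D1_idx \<union> F)) (jet_cov r)"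
      by (rule jet_field_gaussian_insert_D2) (use insert x in \<open>auto simp: D1_idx_def D2_idx_def\<close>)
    then show ?case using x by simp
  qed
qed

end

section \<open>Block covariance of two gradients\<close>

lemma sum_bool_prod_UNIV:
  "(\<Sum>p\<in>(UNIV::(bool\<times>'n::finite) set). f p) = (\<Sum>k\<in>UNIV. f (False,k) + f (True,k))"
proof -
  have "(\<Sum>p\<in>(UNIV::(bool\<times>'n) set). f p) = (\<Sum>b\<in>UNIV. \<Sum>k\<in>UNIV. f (b,k))"
    by (subst sum.cartesian_product) simp
  also have "\<dots> = (\<Sum>k\<in>UNIV. f (False,k) + f (True,k))" by (simp add: UNIV_bool sum.distrib)
  finally show ?thesis .
qed

text \<open>Covariance matrix of \<open>(V(0), V(t))\<close> when the components \<open>V\<^sub>k\<close> are uncorrelated across \<open>k\<close>: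
  one \<open>2\<times>2\<close> block \<open>[x0, xk k; xk k, x0]\<close> per \<open>k\<close>.\<close>

definition pair_block :: "real \<Rightarrow> ('n::finite \<Rightarrow> real) \<Rightarrow> real^(bool\<times>'n)^(bool\<times>'n)" where
  "pair_block x0 xk = (\<chi> p p'. if snd p = snd p' then (if fst p = fst p' then x0 else xk (snd p)) else 0)"

definition pair_block_inv :: "real \<Rightarrow> ('n::finite \<Rightarrow> real) \<Rightarrow> real^(bool\<times>'n)^(bool\<times>'n)" where
  "pair_block_inv x0 xk = (\<chi> p p'. if snd p = snd p'
     then (if fst p = fst p' then x0 else - xk (snd p)) / (x0\<^sup>2 - (xk (snd p))\<^sup>2) else 0)"

lemma pair_block_inverse:
  assumes det: "\<And>k. x0\<^sup>2 \<noteq> (xk k)\<^sup>2"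
  shows "pair_block x0 xk ** pair_block_inv x0 xk = mat 1"
    and "pair_block_inv x0 xk ** pair_block x0 xk = mat 1"
proof -
  have d: "x0\<^sup>2 - (xk k)\<^sup>2 \<noteq> 0" for k using det[of k] by simp
  have d2: "x0*(x0*(x0*x0)) + xk k*(xk k*(xk k*xk k)) \<noteq> x0*(x0*(xk k*(xk k*2)))" for k
  proof
    assume "x0*(x0*(x0*x0)) + xk k*(xk k*(xk k*xk k)) = x0*(x0*(xk k*(xk k*2)))"
    then have "(x0\<^sup>2 - (xk k)\<^sup>2) * (x0\<^sup>2 - (xk k)\<^sup>2) = 0" by (simp add: power2_eq_square algebra_simps)
    then show False using d[of k] by simp
  qed
  show "pair_block x0 xk ** pair_block_inv x0 xk = mat 1"
  proof (subst vec_eq_iff, intro allI, subst vec_eq_iff, intro allI)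
    fix p p'' :: "bool \<times> 'a"
    obtain b k b'' k'' where p: "p = (b,k)" and p'': "p'' = (b'',k'')" by (cases p, cases p'')
    show "(pair_block x0 xk ** pair_block_inv x0 xk) $ p $ p'' = mat 1 $ p $ p''"
      unfolding matrix_matrix_mult_def pair_block_def pair_block_inv_def p p''
      using d[of k] d[of k''] d2[of k'']
      by (cases b; cases b'') (auto simp: sum_bool_prod_UNIV mat_def if_distrib[of "\<lambda>x. _ * x"]
          sum.delta sum.delta' sum.distrib field_simps power2_eq_square cong: if_cong)
  qed
  show "pair_block_inv x0 xk ** pair_block x0 xk = mat 1"
  proof (subst vec_eq_iff, intro allI, subst vec_eq_iff, intro allI)
    fix p p'' :: "bool \<times> 'a"
    obtain b k b'' k'' where p: "p = (b,k)" and p'': "p'' = (b'',k'')" by (cases p, cases p'')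
    show "(pair_block_inv x0 xk ** pair_block x0 xk) $ p $ p'' = mat 1 $ p $ p''"
      unfolding matrix_matrix_mult_def pair_block_def pair_block_inv_def p p''
      using d[of k] d[of k''] d2[of k'']
      by (cases b; cases b'') (auto simp: sum_bool_prod_UNIV mat_def if_distrib[of "\<lambda>x. _ * x"]
          sum.delta sum.delta' sum.distrib field_simps power2_eq_square cong: if_cong)
  qed
qed

text \<open>The only degenerate directions of a block \<open>[x0, xk; xk, x0]\<close> with \<open>x0\<^sup>2 = xk\<^sup>2\<close> are \<open>(1, \<plusminus>1)\<close>.\<close>

lemma pair_block_det_nonzero:
  fixes x0 :: real and xk :: "'n::finite \<Rightarrow> real"
  assumes pos: "\<And>c. c \<noteq> (\<lambda>_. 0) \<Longrightarrow> 0 < (\<Sum>p\<in>UNIV. \<Sum>p'\<in>UNIV. c p * c p' * pair_block x0 xk $ p $ p')"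
  shows "x0\<^sup>2 \<noteq> (xk k)\<^sup>2"
proof
  assume eq: "x0\<^sup>2 = (xk k)\<^sup>2"
  define s where "s = (if xk k = x0 then -1 else (1::real))"
  have s: "x0 + s * xk k = 0" "s * s = 1"
    using eq unfolding s_def power2_eq_iff by auto
  define c where "c p = (if snd p = k then (if fst p then s else 1) else (0::real))" for p :: "bool \<times> 'n"
  have "c \<noteq> (\<lambda>_. 0)" by (auto simp: c_def fun_eq_iff)
  moreover have "(\<Sum>p\<in>UNIV. \<Sum>p'\<in>UNIV. c p * c p' * pair_block x0 xk $ p $ p')
      = 2 * (x0 + s * xk k) + (s * s - 1) * x0"
    unfolding pair_block_def sum_bool_prod_UNIV c_def
    by (simp add: if_distrib[of "\<lambda>x. x * _"] if_distrib[of "\<lambda>x. _ * x"] sum.delta sum.delta'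
        sum.distrib algebra_simps cong: if_cong)
  ultimately show False using pos s by fastforce
qed

lemma matrix_inv_pair_block:
  assumes "\<And>k. x0\<^sup>2 \<noteq> (xk k)\<^sup>2"
  shows "invertible (pair_block x0 xk)" and "matrix_inv (pair_block x0 xk) = pair_block_inv x0 xk"
  using pair_block_inverse[of x0 xk, OF assms] by (auto simp: invertible_def intro: matrix_inv_unique)

section \<open>Covariances at two points on the first axis\<close>

lemma k11_scaleR_axis:
  "k11 r i j (c *\<^sub>R axis a 1) = -4 * r 2 (c\<^sup>2) * c\<^sup>2 * kdelta a i * kdelta a j - 2 * r 1 (c\<^sup>2) * kdelta i j"
  by (simp add: k11_def norm_scaleR_axis_sq scaleR_axis_nth axis_nth_kdelta power2_eq_square algebra_simps)

lemma k21_scaleR_axis: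
  "k21 r i j k (c *\<^sub>R axis a 1) = -8 * r 3 (c\<^sup>2) * c^3 * kdelta a i * kdelta a j * kdelta a k
     - 4 * r 2 (c\<^sup>2) * c * (kdelta i j * kdelta a k + kdelta i k * kdelta a j + kdelta j k * kdelta a i)"
  by (simp add: k21_def norm_scaleR_axis_sq scaleR_axis_nth axis_nth_kdelta power3_eq_cube algebra_simps)

lemma k22_scaleR_axis:
  "k22 r i j k l (c *\<^sub>R axis a 1) = 16 * r 4 (c\<^sup>2) * (c\<^sup>2)\<^sup>2 * kdelta a i * kdelta a j * kdelta a k * kdelta a l
     + 8 * r 3 (c\<^sup>2) * c\<^sup>2 * (kdelta i j * kdelta a k * kdelta a l + kdelta i k * kdelta a j * kdelta a l
       + kdelta i l * kdelta a j * kdelta a k + kdelta j k * kdelta a i * kdelta a l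
       + kdelta j l * kdelta a i * kdelta a k + kdelta k l * kdelta a i * kdelta a j)
     + 4 * r 2 (c\<^sup>2) * (kdelta i j * kdelta k l + kdelta i k * kdelta j l + kdelta i l * kdelta j k)"
  by (simp add: k22_def norm_scaleR_axis_sq scaleR_axis_nth axis_nth_kdelta power2_eq_square algebra_simps)

lemma idx1_least: "(idx1::'n::{finite,linorder}) \<le> x"
  unfolding idx1_def by simp

text \<open>The two points are \<open>two_pt \<rho> False = 0\<close> and \<open>two_pt \<rho> True = t = \<rho> e\<^sub>1\<close>; the
  offset \<open>opp_offset \<rho> b\<close> is \<open>pair_offset \<rho> b (\<not> b)\<close>.\<close>

definition two_pt :: "real \<Rightarrow> bool \<Rightarrow> real^'n::{finite,linorder}" where
  "two_pt \<rho> b = (if b then \<rho> *\<^sub>R axis idx1 1 else 0)"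

definition grad_idx :: "real \<Rightarrow> bool \<times> 'n \<Rightarrow> 'n::{finite,linorder} jet_idx" where
  "grad_idx \<rho> p = D1 (two_pt \<rho> (fst p)) (snd p)"

definition hess_idx :: "real \<Rightarrow> bool \<times> 'n \<times> 'n \<Rightarrow> 'n::{finite,linorder} jet_idx" where
  "hess_idx \<rho> q = D2 (two_pt \<rho> (fst q)) (fst (snd q)) (snd (snd q))"

definition pair_offset :: "real \<Rightarrow> bool \<Rightarrow> bool \<Rightarrow> real" where
  "pair_offset \<rho> b b' = (if b then \<rho> else 0) - (if b' then \<rho> else 0)"

definition opp_offset :: "real \<Rightarrow> bool \<Rightarrow> real" where
  "opp_offset \<rho> b = (if b then \<rho> else - \<rho>)"

lemma two_pt_diff: "two_pt \<rho> b - two_pt \<rho> b' = pair_offset \<rho> b b' *\<^sub>R axis idx1 1"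
  by (cases b; cases b') (simp_all add: two_pt_def pair_offset_def)

lemma opp_offset_mult: "opp_offset \<rho> b * opp_offset \<rho> b' = (if b = b' then \<rho>\<^sup>2 else - (\<rho>\<^sup>2))"
  by (simp add: opp_offset_def power2_eq_square)

lemma pair_offset_sq: "(pair_offset \<rho> b b')\<^sup>2 = (if b = b' then 0 else \<rho>\<^sup>2)"
  by (simp add: pair_offset_def power2_eq_square)

text \<open>\<open>Cov(\<partial>\<^sub>kX(0), \<partial>\<^sub>kX(t))\<close>; the gradient variance is \<open>-2 r'(0)\<close>, and distinct components are
  uncorrelated.\<close>

definition grad_cross_cov :: "(nat \<Rightarrow> real \<Rightarrow> real) \<Rightarrow> real \<Rightarrow> 'n::{finite,linorder} \<Rightarrow> real" where
  "grad_cross_cov r \<rho> k = -4 * r 2 (\<rho>\<^sup>2) * \<rho>\<^sup>2 * kdelta idx1 k - 2 * r 1 (\<rho>\<^sup>2)"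

lemma grad_cov_pair_block:
  "(\<chi> p p'. jet_cov r (grad_idx \<rho> p) (grad_idx \<rho> p')) = pair_block (-2 * r 1 0) (grad_cross_cov r \<rho>)"
proof -
  have entry: "jet_cov r (grad_idx \<rho> (b, k)) (grad_idx \<rho> (b', k'))
      = (if k = k' then (if b = b' then -2 * r 1 0 else grad_cross_cov r \<rho> k) else 0)" for b b' k k'
    unfolding grad_idx_def jet_cov.simps fst_conv snd_conv two_pt_diff k11_scaleR_axis pair_offset_sq
    by (cases b; cases b') (auto simp: grad_cross_cov_def kdelta_def)
  show ?thesis unfolding pair_block_def by (simp add: vec_eq_iff split_paired_all entry)
qed

lemma grad_cross_cov_sq_neq:
  fixes X :: "real^'n::{finite,linorder} \<Rightarrow> 'a \<Rightarrow> real" and k :: 'n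
  assumes P: "prob_space M" and W: "centred_gaussian M (jet_field X) I (jet_cov r)"
    and gy: "range (grad_idx \<rho>) \<subseteq> I"
    and nondeg: "\<And>c. c \<noteq> (\<lambda>_. 0) \<Longrightarrow>
      \<not> (AE \<omega> in M. (\<Sum>p\<in>UNIV. c p * jet_field X (grad_idx \<rho> p) \<omega>) = 0)"
  shows "(-2 * r 1 0)\<^sup>2 \<noteq> (grad_cross_cov r \<rho> k)\<^sup>2"
proof -
  have "0 < (\<Sum>p\<in>UNIV. \<Sum>p'\<in>UNIV.
      c p * c p' * pair_block (-2 * r 1 0) (grad_cross_cov r \<rho> :: 'n \<Rightarrow> real) $ p $ p')"
    if "c \<noteq> (\<lambda>_. 0)" for c
    using centred_gaussian_variance_pos[OF P W finite gy nondeg[OF that]]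
    by (simp only: grad_cov_pair_block[symmetric] vec_lambda_beta)
  then show ?thesis by (rule pair_block_det_nonzero)
qed

text \<open>The entries of \<open>pair_block_inv\<close>, the inverse covariance of the gradients.\<close>

definition grad_prec :: "(nat \<Rightarrow> real \<Rightarrow> real) \<Rightarrow> real \<Rightarrow> bool \<Rightarrow> bool \<Rightarrow> 'n::{finite,linorder} \<Rightarrow> real" where
  "grad_prec r \<rho> b b' k = (if b = b' then -2 * r 1 0 else - grad_cross_cov r \<rho> k)
     / ((-2 * r 1 0)\<^sup>2 - (grad_cross_cov r \<rho> k)\<^sup>2)"

definition den_axis :: "(nat \<Rightarrow> real \<Rightarrow> real) \<Rightarrow> real \<Rightarrow> real" where
  "den_axis r \<rho> = (r 1 0)\<^sup>2 - (r 1 (\<rho>\<^sup>2) + 2 * r 2 (\<rho>\<^sup>2) * \<rho>\<^sup>2)\<^sup>2"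

definition den_perp :: "(nat \<Rightarrow> real \<Rightarrow> real) \<Rightarrow> real \<Rightarrow> real" where
  "den_perp r \<rho> = (r 1 0)\<^sup>2 - (r 1 (\<rho>\<^sup>2))\<^sup>2"

lemma grad_prec_den:
  "grad_prec r \<rho> b b' k = (if b = b' then -2 * r 1 0 else - grad_cross_cov r \<rho> k)
     / (4 * (if k = idx1 then den_axis r \<rho> else den_perp r \<rho>))"
proof -
  have "(-2 * r 1 0)\<^sup>2 - (grad_cross_cov r \<rho> k)\<^sup>2 = 4 * (if k = idx1 then den_axis r \<rho> else den_perp r \<rho>)"
    by (simp add: grad_cross_cov_def den_axis_def den_perp_def kdelta_def power2_eq_square algebra_simps)
  then show ?thesis unfolding grad_prec_def by simp
qed

text \<open>For \<open>i \<le> j\<close>, \<open>\<partial>\<^sub>i\<partial>\<^sub>jX\<close> at one point is correlated with a single component of the gradient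
  at the other, namely \<open>\<partial>\<^sub>mX\<close> with \<open>m = hess_grad_index i j\<close>, with coefficient
  \<open>-(offset) * hess_grad_coeff r \<rho> i j\<close> (see \<open>k21_two_points\<close>).\<close>

definition hess_grad_coeff :: "(nat \<Rightarrow> real \<Rightarrow> real) \<Rightarrow> real \<Rightarrow> 'n::{finite,linorder} \<Rightarrow> 'n \<Rightarrow> real" where
  "hess_grad_coeff r \<rho> i j =
    (if i = j then (if i = idx1 then 12 * r 2 (\<rho>\<^sup>2) + 8 * \<rho>\<^sup>2 * r 3 (\<rho>\<^sup>2) else 4 * r 2 (\<rho>\<^sup>2))
     else (if i = idx1 then 4 * r 2 (\<rho>\<^sup>2) else 0))"

definition hess_grad_index :: "'n::{finite,linorder} \<Rightarrow> 'n \<Rightarrow> 'n" where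
  "hess_grad_index i j = (if i = j then idx1 else j)"

lemma k21_two_points:
  fixes i j m :: "'n::{finite,linorder}"
  assumes ij: "i \<le> j"
  shows "k21 r i j m (pair_offset \<rho> b b2 *\<^sub>R axis idx1 1)
    = (if b2 = b then 0 else - opp_offset \<rho> b * hess_grad_coeff r \<rho> i j * kdelta (hess_grad_index i j) m)"
proof (cases "b2 = b")
  case True then show ?thesis by (simp add: k21_def pair_offset_def)
next
  case False
  have c: "pair_offset \<rho> b b2 = opp_offset \<rho> b"
    using False by (cases b; cases b2) (auto simp: pair_offset_def opp_offset_def)
  have c2: "(opp_offset \<rho> b)\<^sup>2 = \<rho>\<^sup>2" "(opp_offset \<rho> b)^3 = opp_offset \<rho> b * \<rho>\<^sup>2"
    by (auto simp: opp_offset_def power2_eq_square power3_eq_cube)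
  have l: "idx1 \<le> i" by (rule idx1_least)
  show ?thesis
  proof (cases "i = j")
    case True
    then show ?thesis using False unfolding k21_scaleR_axis c c2
      by (cases "i = idx1") (auto simp: hess_grad_coeff_def hess_grad_index_def kdelta_def algebra_simps)
  next
    case ne: False
    with ij l have j1: "j \<noteq> idx1" "idx1 \<noteq> j" by auto
    show ?thesis using False ne j1 unfolding k21_scaleR_axis c c2
      by (cases "i = idx1") (auto simp: hess_grad_coeff_def hess_grad_index_def kdelta_def algebra_simps)
  qed
qed

lemma regression_quadratic_pair_block:
  fixes \<beta>q \<beta>q' :: "bool \<times> 'n::finite \<Rightarrow> real"
  assumes bq: "\<And>b2 m. \<beta>q (b2,m) = (if b2 = b then 0 else - opp_offset \<rho> b * A * kdelta mm m)"
    and bq': "\<And>b1 m. \<beta>q' (b1,m) = (if b1 = b' then 0 else - opp_offset \<rho> b' * A' * kdelta mm' m)"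
  shows "(\<Sum>p\<in>UNIV. \<Sum>p'\<in>UNIV. \<beta>q' p * pair_block_inv x0 xk $ p $ p' * \<beta>q p')
    = A * A' * (if mm = mm' then opp_offset \<rho> b * opp_offset \<rho> b'
        * ((if b = b' then x0 else - xk mm) / (x0\<^sup>2 - (xk mm)\<^sup>2)) else 0)"
proof -
  let ?P = "pair_block_inv x0 xk"
  have inner: "(\<Sum>p\<in>UNIV. \<beta>q' p * ?P$p$(b2,m')) = - opp_offset \<rho> b' * A' * kdelta mm' m'
      * (if \<not> b' = b2 then x0 else - xk m') / (x0\<^sup>2 - (xk m')\<^sup>2)" for b2 m'
    unfolding sum_bool_prod_UNIV bq' pair_block_inv_def
    by (cases b'; cases b2) (auto simp: if_distrib[of "\<lambda>x. _ * x"] sum.delta' sum.distrib cong: if_cong)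
  have "(\<Sum>p\<in>UNIV. \<Sum>p'\<in>UNIV. \<beta>q' p * ?P $ p $ p' * \<beta>q p')
      = (\<Sum>p'\<in>UNIV. (\<Sum>p\<in>UNIV. \<beta>q' p * ?P$p$p') * \<beta>q p')"
    by (subst sum.swap) (simp add: sum_distrib_right)
  also have "\<dots> = (\<Sum>p'\<in>UNIV. - opp_offset \<rho> b' * A' * kdelta mm' (snd p')
      * (if \<not> b' = fst p' then x0 else - xk (snd p')) / (x0\<^sup>2 - (xk (snd p'))\<^sup>2) * \<beta>q p')"
    using inner[of "fst p'" "snd p'" for p'] by (simp only: prod.collapse)
  also have "\<dots> = A * A' * (if mm = mm' then opp_offset \<rho> b * opp_offset \<rho> b'
        * ((if b = b' then x0 else - xk mm) / (x0\<^sup>2 - (xk mm)\<^sup>2)) else 0)"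
    unfolding sum_bool_prod_UNIV bq
    by (cases b; cases b') (auto simp: kdelta_def if_distrib[of "\<lambda>x. _ * x"] sum.delta sum.delta'
        sum.distrib cong: if_cong)
  finally show ?thesis .
qed

definition hess_cond_cov ::
  "(nat \<Rightarrow> real \<Rightarrow> real) \<Rightarrow> real \<Rightarrow> bool \<times> 'n::{finite,linorder} \<times> 'n \<Rightarrow> bool \<times> 'n \<times> 'n \<Rightarrow> real"
  where "hess_cond_cov r \<rho> = (\<lambda>(b, i, j) (b', k, l).
    k22 r i j k l (pair_offset \<rho> b b' *\<^sub>R axis idx1 1)
    - hess_grad_coeff r \<rho> i j * hess_grad_coeff r \<rho> k l
      * (if hess_grad_index i j = hess_grad_index k l
         then opp_offset \<rho> b * opp_offset \<rho> b' * grad_prec r \<rho> b b' (hess_grad_index i j) else 0))"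

lemma hess_regression_kernel_two_points:
  fixes i j k l :: "'n::{finite,linorder}"
  assumes ij: "i \<le> j" and kl: "k \<le> l"
  shows "jet_cov r (hess_idx \<rho> (b,i,j)) (hess_idx \<rho> (b',k,l))
    - (\<Sum>p\<in>UNIV. \<Sum>p'\<in>UNIV. jet_cov r (hess_idx \<rho> (b',k,l)) (grad_idx \<rho> p)
        * pair_block_inv (-2 * r 1 0) (grad_cross_cov r \<rho>) $ p $ p'
        * jet_cov r (hess_idx \<rho> (b,i,j)) (grad_idx \<rho> p'))
    = hess_cond_cov r \<rho> (b,i,j) (b',k,l)"
proof -
  have cross: "jet_cov r (hess_idx \<rho> (b1,i1,j1)) (grad_idx \<rho> (b2,m))
      = (if b2 = b1 then 0
         else - opp_offset \<rho> b1 * hess_grad_coeff r \<rho> i1 j1 * kdelta (hess_grad_index i1 j1) m)"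
    if "i1 \<le> j1" for b1 b2 i1 j1 m
    unfolding hess_idx_def grad_idx_def by (simp add: two_pt_diff k21_two_points[OF that])
  have "(\<Sum>p\<in>UNIV. \<Sum>p'\<in>UNIV. jet_cov r (hess_idx \<rho> (b',k,l)) (grad_idx \<rho> p)
        * pair_block_inv (-2 * r 1 0) (grad_cross_cov r \<rho>) $ p $ p'
        * jet_cov r (hess_idx \<rho> (b,i,j)) (grad_idx \<rho> p'))
    = hess_grad_coeff r \<rho> i j * hess_grad_coeff r \<rho> k l * (if hess_grad_index i j = hess_grad_index k l
        then opp_offset \<rho> b * opp_offset \<rho> b' * grad_prec r \<rho> b b' (hess_grad_index i j) else 0)"
    unfolding grad_prec_def
    by (rule regression_quadratic_pair_block) (auto simp: cross ij kl pair_block_inv_def)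
  moreover have "jet_cov r (hess_idx \<rho> (b,i,j)) (hess_idx \<rho> (b',k,l))
      = k22 r i j k l (pair_offset \<rho> b b' *\<^sub>R axis idx1 1)"
    by (simp add: hess_idx_def two_pt_diff)
  ultimately show ?thesis by (simp add: hess_cond_cov_def)
qed

lemma hess_cond_cov_diag_diag:
  fixes i k :: "'n::{finite,linorder}"
  shows "hess_cond_cov r \<rho> (b,i,i) (b',k,k) = Kcov r \<rho> (b,i,i) (b',k,k)"
proof -
  show ?thesis
    unfolding hess_cond_cov_def Kcov_def Let_def prod.case
    apply (fold den_axis_def den_perp_def)
    apply (simp add: k22_scaleR_axis hess_grad_coeff_def hess_grad_index_def pair_offset_sq
        mult.assoc[symmetric] opp_offset_mult)
    apply (cases b; cases b')
    apply (simp_all add: grad_prec_den grad_cross_cov_def kdelta_def)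
    apply (auto simp: field_split_simps algebra_simps)
    apply (simp_all add: power_numeral_reduce algebra_simps)
    done
qed

lemma hess_cond_cov_offdiag_same:
  fixes i j :: "'n::{finite,linorder}"
  assumes ij: "i < j"
  shows "hess_cond_cov r \<rho> (b,i,j) (b',i,j) = Kcov r \<rho> (b,i,j) (b',i,j)"
proof -
  have j1: "j \<noteq> idx1" "idx1 \<noteq> j" using ij idx1_least[of i] by auto
  have ne: "i \<noteq> j" "j \<noteq> i" using ij by auto
  show ?thesis
    unfolding hess_cond_cov_def Kcov_def Let_def prod.case
    apply (fold den_axis_def den_perp_def)
    apply (simp add: k22_scaleR_axis hess_grad_coeff_def hess_grad_index_def pair_offset_sq
        mult.assoc[symmetric] opp_offset_mult ne j1)
    apply (cases b; cases b')
    apply (simp_all add: grad_prec_den grad_cross_cov_def kdelta_def ne j1)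
    apply (auto simp: field_split_simps algebra_simps)
    apply (simp_all add: power_numeral_reduce algebra_simps)
    done
qed

lemma hess_cond_cov_offdiag_offdiag:
  fixes i j k l :: "'n::{finite,linorder}"
  assumes ij: "i < j" and kl: "k < l"
  shows "hess_cond_cov r \<rho> (b,i,j) (b',k,l) = Kcov r \<rho> (b,i,j) (b',k,l)"
proof (cases "i = k \<and> j = l")
  case True then show ?thesis using hess_cond_cov_offdiag_same[OF ij] by simp
next
  case False
  have j1: "j \<noteq> idx1" "idx1 \<noteq> j" using ij idx1_least[of i] by auto
  have l1: "l \<noteq> idx1" "idx1 \<noteq> l" using kl idx1_least[of k] by auto
  have ne: "i \<noteq> j" "j \<noteq> i" "k \<noteq> l" "l \<noteq> k" using ij kl by auto
  have coeff0: "hess_grad_index i j = hess_grad_index k l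
      \<Longrightarrow> hess_grad_coeff r \<rho> i j * hess_grad_coeff r \<rho> k l = 0"
    using False ij kl by (auto simp: hess_grad_index_def hess_grad_coeff_def)
  have K0: "Kcov r \<rho> (b,i,j) (b',k,l) = 0"
    unfolding Kcov_def Let_def using False ne by auto
  have "k22 r i j k l (pair_offset \<rho> b b' *\<^sub>R axis idx1 1) = 0"
    unfolding k22_scaleR_axis using False ij kl j1 l1 ne by (auto simp: kdelta_def)
  then show ?thesis using K0 coeff0 unfolding hess_cond_cov_def by auto
qed

lemma hess_cond_cov_diag_offdiag:
  fixes i k l :: "'n::{finite,linorder}"
  assumes kl: "k < l"
  shows "hess_cond_cov r \<rho> (b,i,i) (b',k,l) = Kcov r \<rho> (b,i,i) (b',k,l)"
proof -
  have l1: "l \<noteq> idx1" "idx1 \<noteq> l" using kl idx1_least[of k] by auto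
  have ne: "k \<noteq> l" "l \<noteq> k" using kl by auto
  show ?thesis
    unfolding hess_cond_cov_def Kcov_def Let_def prod.case
    using l1 ne by (simp add: k22_scaleR_axis hess_grad_coeff_def hess_grad_index_def kdelta_def)
qed

lemma hess_cond_cov_offdiag_diag:
  fixes i j k :: "'n::{finite,linorder}"
  assumes ij: "i < j"
  shows "hess_cond_cov r \<rho> (b,i,j) (b',k,k) = Kcov r \<rho> (b,i,j) (b',k,k)"
proof -
  have j1: "j \<noteq> idx1" "idx1 \<noteq> j" using ij idx1_least[of i] by auto
  have ne: "i \<noteq> j" "j \<noteq> i" using ij by auto
  show ?thesis
    unfolding hess_cond_cov_def Kcov_def Let_def prod.case
    using j1 ne by (auto simp: k22_scaleR_axis hess_grad_coeff_def hess_grad_index_def kdelta_def)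
qed

lemma hess_cond_cov_eq_Kcov:
  fixes i j k l :: "'n::{finite,linorder}"
  assumes ij: "i \<le> j" and kl: "k \<le> l"
  shows "hess_cond_cov r \<rho> (b,i,j) (b',k,l) = Kcov r \<rho> (b,i,j) (b',k,l)"
proof (cases "i = j")
  case True
  then show ?thesis
  proof (cases "k = l")
    case True show ?thesis unfolding \<open>i = j\<close> True by (rule hess_cond_cov_diag_diag)
  next
    case False with kl have "k < l" by simp
    then show ?thesis unfolding \<open>i = j\<close> by (rule hess_cond_cov_diag_offdiag)
  qed
next
  case False
  then show ?thesis
  proof (cases "k = l")
    case True from \<open>i \<noteq> j\<close> ij have "i < j" by simp
    then show ?thesis unfolding True by (rule hess_cond_cov_offdiag_diag)
  next
    case False with \<open>i \<noteq> j\<close> ij kl have "i < j" "k < l" by auto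
    then show ?thesis by (rule hess_cond_cov_offdiag_offdiag)
  qed
qed

theorem lemma4:
  fixes M :: "'a measure"
    and X :: "real^'n::{finite,linorder} \<Rightarrow> 'a \<Rightarrow> real"
    and r :: "nat \<Rightarrow> real \<Rightarrow> real"
    and \<rho> :: real
  assumes "prob_space M"
    \<comment> \<open>(A4): centred stationary isotropic Gaussian field with covariance r(|s-t|^2)\<close>
    and gauss: "centred_gaussian M X UNIV (\<lambda>s t. r 0 ((norm (s - t))^2))"
    and paths: "\<forall>\<omega>\<in>space M. C2_fun (\<lambda>s. X s \<omega>)"
    and var1: "r 0 0 = 1"
    \<comment> \<open>r k is the k-th derivative of r on [0,oo), r in C^4\<close>
    and deriv_r: "\<forall>k<4. \<forall>x\<ge>0. (r k has_real_derivative r (Suc k) x) (at x within {0..})"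
    and cont4: "continuous_on {0..} (r 4)"
    and lam2: "lam r 1 > 0"
    and N1: "CARD('n) = 1 \<longrightarrow> (\<forall>n\<in>{2,3,4::nat}. lam r n * lam r (n-2) > (lam r (n-1))^2)"
    and rho: "\<rho> > 0"
    \<comment> \<open>Y = (grad X(0), grad X(t)), t = rho e_1; Z = (Hess X(0), Hess X(t))\<close>
    and Y_def: "Y = (\<lambda>(b, i) \<omega>. partial i (\<lambda>s. X s \<omega>)
                        (if b then \<rho> *\<^sub>R axis (idx1::'n) 1 else 0))"
    and Z_def: "Z = (\<lambda>(b, i, j) \<omega>. partial i (partial j (\<lambda>s. X s \<omega>))
                        (if b then \<rho> *\<^sub>R axis (idx1::'n) 1 else 0))"
    \<comment> \<open>(grad X(0), grad X(t)) has a nondegenerate distribution\<close>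
    and nondeg: "\<forall>c :: bool \<times> 'n \<Rightarrow> real. c \<noteq> (\<lambda>_. 0) \<longrightarrow>
                   \<not> (AE \<omega> in M. (\<Sum>p\<in>UNIV. c p * Y p \<omega>) = 0)"
    \<comment> \<open>xi = (Hess X(0), Hess X(t)) conditioned on grad X(0) = grad X(t) = 0\<close>
    and xi_def: "\<xi> = regress M Y Z"
  shows "centred_gaussian M \<xi> {(b, i, j). i \<le> j} (Kcov r \<rho>)"
proof -
  note P = \<open>prob_space M\<close>
  have W: "centred_gaussian M (jet_field X) (D1_idx \<union> D2_idx) (jet_cov r)"
    by (rule jet_field_gaussian[OF P gauss paths deriv_r])
  have Y: "Y = (\<lambda>p. jet_field X (grad_idx \<rho> p))"
    unfolding Y_def by (auto simp: fun_eq_iff jet_field_def grad_idx_def two_pt_def)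
  have Z: "Z = (\<lambda>q. jet_field X (hess_idx \<rho> q))"
    unfolding Z_def by (auto simp: fun_eq_iff jet_field_def hess_idx_def two_pt_def)
  have gy: "range (grad_idx \<rho>) \<subseteq> D1_idx \<union> D2_idx" and gz: "range (hess_idx \<rho>) \<subseteq> D1_idx \<union> D2_idx"
    by (auto simp: grad_idx_def hess_idx_def D1_idx_def D2_idx_def)
  have det: "(-2 * r 1 0)\<^sup>2 \<noteq> (grad_cross_cov r \<rho> k)\<^sup>2" for k :: 'n
    using nondeg unfolding Y by (intro grad_cross_cov_sq_neq[OF P W gy]) blast
  have "centred_gaussian M \<xi> UNIV (\<lambda>q q'. jet_cov r (hess_idx \<rho> q) (hess_idx \<rho> q')
      - (\<Sum>p\<in>UNIV. \<Sum>p'\<in>UNIV. jet_cov r (hess_idx \<rho> q') (grad_idx \<rho> p)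
          * pair_block_inv (-2 * r 1 0) (grad_cross_cov r \<rho>) $ p $ p'
          * jet_cov r (hess_idx \<rho> q) (grad_idx \<rho> p')))"
    using centred_gaussian_regress[OF P W jet_cov_sym gy gz]
      matrix_inv_pair_block[of "-2 * r 1 0" "grad_cross_cov r \<rho>", OF det]
    unfolding xi_def Y Z grad_cov_pair_block by simp
  then show ?thesis
    by (rule centred_gaussian_cong[OF centred_gaussian_subset[OF _ subset_UNIV]])
      (clarify, simp only: hess_regression_kernel_two_points hess_cond_cov_eq_Kcov)
qed

end
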